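(* Let $\Sigma,\Delta,\Gamma\in\mathcal{G}_n$ be pairwise generalized cospectral. Suppose $Q\in\mathcal{Q}(\Sigma)$ has level $\ell$ and $Q_1\in\mathcal{Q}(\Sigma)$ has level $\ell_1$, with $Q^{\rm T}S(\Sigma)Q=S(\Delta)$, $Q_1^{\rm T}S(\Sigma)Q_1=S(\Gamma)$ and $\ell_1\mid\ell$. Let $Q_2=Q_1^{\rm T}Q$. Then $Q_2^{\rm T}S(\Gamma)Q_2=S(\Delta)$, and the level of $Q_2$ is $\ell/\ell_1$.
   Context: An oriented graph on vertices $v_1,\dots,v_n$ is a simple graph with each edge directed; its skew-adjacency matrix $S=(s_{ij})$ has $s_{ij}=1$ if $(v_i,v_j)$ is an arc, $-1$ if $(v_j,v_i)$ is an arc, $0$ otherwise. Two oriented graphs are generalized cospectral if their skew-adjacency matrices $S$ have the same spectrum and the matrices $J-I-S$ have the same spectrum. With $e$ the all-one vector, $W(\Sigma)=[e,Se,\dots,S^{n-1}e]$, $S=S(\Sigma)$. $\mathcal{G}_n$ is the set of $n$-vertex oriented graphs with $2^{-\lfloor n/2\rfloor}\det W(\Sigma)$ an odd square-free integer. A rational orthogonal matrix $Q$ is regular if $Qe=e$; its level is the least positive integer $k$ with $kQ$ integral. $\mathcal{Q}(\Sigma)$ is the set of regular rational orthogonal $Q$ with $Q^{\rm T}S(\Sigma)Q=S(\Delta)$ for some oriented graph $\Delta$ generalized cospectral with $\Sigma$. *)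

theory Defs
  imports "Jordan_Normal_Form.Char_Poly" "Jordan_Normal_Form.Determinant"
    "HOL-Computational_Algebra.Squarefree"
begin

text \<open>An oriented graph on vertices 0,...,n-1 is given by its arc relation
  arc i j (an arc from v_i to v_j): irreflexive, at most one direction per pair.
  Only the restriction to {0..<n} matters.\<close>
definition oriented_graph :: "nat \<Rightarrow> (nat \<Rightarrow> nat \<Rightarrow> bool) \<Rightarrow> bool" where
  "oriented_graph n arc \<longleftrightarrow>
     (\<forall>i<n. \<not> arc i i) \<and> (\<forall>i<n. \<forall>j<n. \<not> (arc i j \<and> arc j i))"

definition skew_adj :: "nat \<Rightarrow> (nat \<Rightarrow> nat \<Rightarrow> bool) \<Rightarrow> rat mat" where
  "skew_adj n arc = mat n n (\<lambda>(i,j). if arc i j then 1 else if arc j i then -1 else 0)"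

definition ones_vec :: "nat \<Rightarrow> rat vec" where
  "ones_vec n = vec n (\<lambda>_. 1)"

definition ones_mat :: "nat \<Rightarrow> rat mat" where
  "ones_mat n = mat n n (\<lambda>_. 1)"

definition walk_mat :: "nat \<Rightarrow> (nat \<Rightarrow> nat \<Rightarrow> bool) \<Rightarrow> rat mat" where
  "walk_mat n arc = mat_of_cols n (map (\<lambda>k. (skew_adj n arc ^\<^sub>m k) *\<^sub>v ones_vec n) [0..<n])"

text \<open>Same spectrum = same characteristic polynomial (eigenvalues with multiplicity).\<close>
definition gen_cospectral :: "nat \<Rightarrow> (nat \<Rightarrow> nat \<Rightarrow> bool) \<Rightarrow> (nat \<Rightarrow> nat \<Rightarrow> bool) \<Rightarrow> bool" where
  "gen_cospectral n A B \<longleftrightarrow>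
     char_poly (skew_adj n A) = char_poly (skew_adj n B) \<and>
     char_poly (ones_mat n - 1\<^sub>m n - skew_adj n A) = char_poly (ones_mat n - 1\<^sub>m n - skew_adj n B)"

definition in_G :: "nat \<Rightarrow> (nat \<Rightarrow> nat \<Rightarrow> bool) \<Rightarrow> bool" where
  "in_G n arc \<longleftrightarrow> oriented_graph n arc \<and>
     (\<exists>m::int. det (walk_mat n arc) = 2 ^ (n div 2) * of_int m \<and> odd m \<and> squarefree m)"

definition regular_rat_orth :: "nat \<Rightarrow> rat mat \<Rightarrow> bool" where
  "regular_rat_orth n Q \<longleftrightarrow> Q \<in> carrier_mat n n \<and> transpose_mat Q * Q = 1\<^sub>m n
     \<and> Q *\<^sub>v ones_vec n = ones_vec n"

definition integral_mat :: "rat mat \<Rightarrow> bool" where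
  "integral_mat M \<longleftrightarrow> (\<forall>i<dim_row M. \<forall>j<dim_col M. M $$ (i,j) \<in> \<int>)"

definition level :: "rat mat \<Rightarrow> nat" where
  "level Q = (LEAST k. k > 0 \<and> integral_mat (of_nat k \<cdot>\<^sub>m Q))"

definition Qset :: "nat \<Rightarrow> (nat \<Rightarrow> nat \<Rightarrow> bool) \<Rightarrow> rat mat set" where
  "Qset n arc = {Q. regular_rat_orth n Q \<and>
     (\<exists>D. oriented_graph n D \<and> gen_cospectral n arc D \<and>
          transpose_mat Q * skew_adj n arc * Q = skew_adj n D)}"

end

theory Submission
  imports Defs
begin

text \<open>The first claim only uses \<open>Q\<^sub>1 Q\<^sub>1\<^sup>T = I\<close>. For the level, let \<open>X = l Q\<close> and \<open>Y = l\<^sub>1 Q\<^sub>1\<close>; these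
  are integral and \<open>Y\<^sup>T X = l\<^sub>1 l Q\<^sub>2\<close>. Since \<open>Q = Q\<^sub>1 Q\<^sub>2\<close>, the level \<open>l\<close> divides \<open>l\<^sub>1 \<cdot> level Q\<^sub>2\<close>;
  conversely \<open>(l/l\<^sub>1) Q\<^sub>2\<close> is integral as soon as \<open>l\<^sub>1\<^sup>2\<close> divides \<open>Y\<^sup>T X\<close>.

  Halving the last \<open>\<lfloor>n/2\<rfloor>\<close> columns of suitable integral combinations of the columns of the
  walk matrix gives an integral matrix \<open>W'\<close> with \<open>det W' = det W / 2\<^bsup>\<lfloor>n/2\<rfloor>\<^esup>\<close>, odd and square-free,
  and \<open>Q\<^sup>T W'(\<Sigma>) = W'(\<Delta>)\<close> because \<open>Q\<close> fixes \<open>e\<close> and conjugates \<open>S(\<Sigma>)\<close> to \<open>S(\<Delta>)\<close>. By Cramer's rule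
  \<open>l\<close> and \<open>l\<^sub>1\<close> divide \<open>det W'\<close>, so they are odd and square-free, and it suffices to show \<open>p\<^sup>2 | Y\<^sup>T X\<close>
  for every prime \<open>p | l\<^sub>1\<close>. Modulo \<open>p\<close>, the columns of \<open>X\<close> and \<open>Y\<close> lie in the kernel of \<open>W'(\<Sigma>)\<^sup>T\<close>,
  which is a line because \<open>p\<close> divides \<open>det W'\<close> exactly once; together with \<open>X\<^sup>T X = l\<^sup>2 I\<close> and
  \<open>Y\<^sup>T Y = l\<^sub>1\<^sup>2 I\<close> this forces \<open>Y\<^sup>T X \<equiv> 0 (mod p\<^sup>2)\<close>.\<close>

lemma index_mult_mat_sum:
  assumes "A \<in> carrier_mat nr n" "B \<in> carrier_mat n nc" "i < nr" "j < nc"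
  shows "(A * B) $$ (i,j) = (\<Sum>l<n. A $$ (i,l) * B $$ (l,j))"
  using assms by (auto simp: scalar_prod_def lessThan_atLeast0 intro!: sum.cong)

lemma index_transpose_mult_sum:
  assumes "Y \<in> carrier_mat n m" "X \<in> carrier_mat n k" "u < m" "v < k"
  shows "(transpose_mat Y * X) $$ (u,v) = (\<Sum>r<n. Y $$ (r,u) * X $$ (r,v))"
  using index_mult_mat_sum[of "transpose_mat Y" m n X k u v] assms by simp

lemma index_mult_mat_vec_sum:
  assumes "A \<in> carrier_mat nr n" "v \<in> carrier_vec n" "i < nr"
  shows "(A *\<^sub>v v) $ i = (\<Sum>l<n. A $$ (i,l) * v $ l)"
  using assms by (auto simp: scalar_prod_def lessThan_atLeast0 intro!: sum.cong)

lemma pow_mat_add: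
  assumes A: "A \<in> carrier_mat n n"
  shows "A ^\<^sub>m (a + b) = A ^\<^sub>m a * A ^\<^sub>m b"
proof (induction b)
  case 0
  then show ?case using A by simp
next
  case (Suc b)
  have "A ^\<^sub>m (a + Suc b) = (A ^\<^sub>m a * A ^\<^sub>m b) * A" using Suc by simp
  also have "\<dots> = A ^\<^sub>m a * (A ^\<^sub>m b * A)" using A by (simp add: assoc_mult_mat[of _ n n _ n _ n])
  finally show ?case by simp
qed

lemma pow_mat_Suc_left:
  assumes "A \<in> carrier_mat n n"
  shows "A ^\<^sub>m Suc b = A * A ^\<^sub>m b"
  using pow_mat_add[OF assms, of 1 b] assms by simp

lemma index_pow_mat_Suc:
  assumes "A \<in> carrier_mat n n" "i < n" "j < n"
  shows "(A ^\<^sub>m Suc k) $$ (i,j) = (\<Sum>l<n. (A ^\<^sub>m k) $$ (i,l) * A $$ (l,j))"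
  using index_mult_mat_sum[of "A ^\<^sub>m k" n n A n i j] assms by simp

lemma row_sum_pow_mat_add:
  assumes A: "A \<in> carrier_mat n n" and i: "i < n"
  shows "(\<Sum>m<n. (A ^\<^sub>m (d + r)) $$ (i,m)) = (\<Sum>l<n. (A ^\<^sub>m d) $$ (i,l) * (\<Sum>m<n. (A ^\<^sub>m r) $$ (l,m)))"
proof -
  have "(\<Sum>m<n. (A ^\<^sub>m (d + r)) $$ (i,m)) = (\<Sum>m<n. \<Sum>l<n. (A ^\<^sub>m d) $$ (i,l) * (A ^\<^sub>m r) $$ (l,m))"
    unfolding pow_mat_add[OF A]
    by (intro sum.cong refl index_mult_mat_sum[OF pow_carrier_mat[OF A] pow_carrier_mat[OF A] i]) simp
  also have "\<dots> = (\<Sum>l<n. (A ^\<^sub>m d) $$ (i,l) * (\<Sum>m<n. (A ^\<^sub>m r) $$ (l,m)))"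
    by (subst sum.swap) (simp add: sum_distrib_left)
  finally show ?thesis .
qed

lemma pow_mat_intertwine:
  assumes P: "P \<in> carrier_mat n n" and A: "A \<in> carrier_mat n n" and B: "B \<in> carrier_mat n n"
    and PA: "P * A = B * P"
  shows "P * A ^\<^sub>m k = B ^\<^sub>m k * P"
proof (induction k)
  case 0
  show ?case using P A B by simp
next
  case (Suc k)
  have "P * A ^\<^sub>m Suc k = (P * A ^\<^sub>m k) * A"
    using P A by (simp add: assoc_mult_mat[of _ n n _ n _ n])
  also have "\<dots> = B ^\<^sub>m k * (P * A)"
    unfolding Suc using P A B by (simp add: assoc_mult_mat[of _ n n _ n _ n])
  also have "\<dots> = B ^\<^sub>m Suc k * P"
    unfolding PA using P B by (simp add: assoc_mult_mat[of _ n n _ n _ n])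
  finally show ?case .
qed

lemma transpose_mult_conj:
  fixes Q Q\<^sub>1 S :: "'a::field mat"
  assumes Q: "Q \<in> carrier_mat n n" and Q1: "Q\<^sub>1 \<in> carrier_mat n n" and S: "S \<in> carrier_mat n n"
    and Q1_orth: "transpose_mat Q\<^sub>1 * Q\<^sub>1 = 1\<^sub>m n"
  shows "transpose_mat (transpose_mat Q\<^sub>1 * Q) * (transpose_mat Q\<^sub>1 * S * Q\<^sub>1) * (transpose_mat Q\<^sub>1 * Q)
    = transpose_mat Q * S * Q"
proof -
  have Q1t: "transpose_mat Q\<^sub>1 \<in> carrier_mat n n" using Q1 by simp
  have inv: "Q\<^sub>1 * transpose_mat Q\<^sub>1 = 1\<^sub>m n" by (rule mat_mult_left_right_inverse[OF Q1t Q1 Q1_orth])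
  have "transpose_mat (transpose_mat Q\<^sub>1 * Q) * (transpose_mat Q\<^sub>1 * S * Q\<^sub>1) * (transpose_mat Q\<^sub>1 * Q)
      = transpose_mat Q * (Q\<^sub>1 * transpose_mat Q\<^sub>1) * S * (Q\<^sub>1 * transpose_mat Q\<^sub>1) * Q"
    using Q Q1 Q1t S by (simp add: transpose_mult[OF Q1t Q] assoc_mult_mat[of _ n n _ n _ n])
  then show ?thesis using Q S unfolding inv by simp
qed

lemma sum_atMost_even_odd:
  fixes g :: "nat \<Rightarrow> 'a::comm_monoid_add"
  shows "(\<Sum>s\<le>2 * k. g s) = (\<Sum>r\<le>k. g (2 * r)) + (\<Sum>r<k. g (2 * r + 1))"
proof (induction k)
  case (Suc k)
  have "{..2 * Suc k} = insert (2 * k + 2) (insert (2 * k + 1) {..2 * k})" by auto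
  then show ?case using Suc by (simp add: ac_simps)
qed simp

section \<open>The Cayley-Hamilton theorem, entrywise\<close>

text \<open>Coefficientwise reading of \<open>(x I - A) adj (x I - A) = \<chi>\<^sub>A(x) I\<close>.\<close>
lemma coeff_char_poly_matrix_mult_adj:
  fixes A :: "'a::comm_ring_1 mat"
  defines "b s l j \<equiv> coeff (adj_mat (char_poly_matrix A) $$ (l,j)) s"
  assumes A: "A \<in> carrier_mat n n" and ij: "i < n" "j < n"
  shows "(if s = 0 then 0 else b (s - 1) i j) - (\<Sum>l<n. A $$ (i,l) * b s l j)
    = (if i = j then coeff (char_poly A) s else 0)"
proof -
  define M where "M = char_poly_matrix A"
  define Adj where "Adj = adj_mat M"
  have M: "M \<in> carrier_mat n n" using A unfolding M_def by simp
  have Adj: "Adj \<in> carrier_mat n n" using adj_mat(1)[OF M] unfolding Adj_def .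
  have M_entry: "M $$ (i,l) = (if i = l then [:0,1:] else 0) + [:- A $$ (i,l):]" if "l < n" for l
    using that ij A unfolding M_def char_poly_matrix_def by auto
  have "(M * Adj) $$ (i,j) = (\<Sum>l<n. M $$ (i,l) * Adj $$ (l,j))"
    using index_mult_mat_sum[OF M Adj ij] .
  also have "\<dots> = (\<Sum>l<n. (if i = l then [:0,1:] * Adj $$ (l,j) else 0) + [:- A $$ (i,l):] * Adj $$ (l,j))"
    by (rule sum.cong) (auto simp: M_entry distrib_right)
  also have "\<dots> = [:0,1:] * Adj $$ (i,j) + (\<Sum>l<n. [:- A $$ (i,l):] * Adj $$ (l,j))"
    unfolding sum.distrib using ij by simp
  finally have "coeff ((M * Adj) $$ (i,j)) s = (if s = 0 then 0 else b (s - 1) i j) - (\<Sum>l<n. A $$ (i,l) * b s l j)"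
    unfolding b_def M_def[symmetric] Adj_def[symmetric] by (cases s) (auto simp: coeff_sum sum_negf)
  moreover have "M * Adj = char_poly A \<cdot>\<^sub>m 1\<^sub>m n"
    using adj_mat(2)[OF M] by (simp add: char_poly_def M_def Adj_def)
  then have "coeff ((M * Adj) $$ (i,j)) s = (if i = j then coeff (char_poly A) s else 0)"
    using ij by simp
  ultimately show ?thesis by simp
qed

lemma degree_adj_char_poly_matrix:
  fixes A :: "'a::comm_ring_1 mat"
  assumes A: "A \<in> carrier_mat n n" and lj: "l < n" "j < n"
  shows "degree (adj_mat (char_poly_matrix A) $$ (l,j)) < n"
proof -
  define M where "M = char_poly_matrix A"
  have M: "M \<in> carrier_mat n n" using A unfolding M_def by simp
  have "degree (det (mat_delete M j l)) \<le> 1 * (n - 1)"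
  proof (rule degree_det_le)
    show "mat_delete M j l \<in> carrier_mat (n - 1) (n - 1)" using mat_delete_carrier[OF M] .
    fix i' j' assume ij': "i' < n - 1" "j' < n - 1"
    define r where "r = (if i' < j then i' else Suc i')"
    define t where "t = (if j' < l then j' else Suc j')"
    have "r < n" "t < n" using ij' unfolding r_def t_def by auto
    then have "degree (M $$ (r,t)) \<le> 1"
      using A unfolding M_def char_poly_matrix_def by (auto intro: order.trans[OF degree_add_le_max])
    moreover have "mat_delete M j l $$ (i', j') = M $$ (r, t)"
      using ij' M unfolding mat_delete_def r_def t_def by auto
    ultimately show "degree (mat_delete M j l $$ (i', j')) \<le> 1" by simp
  qed
  moreover have "adj_mat M $$ (l,j) = (-1)^(j+l) * det (mat_delete M j l)"
    using lj M unfolding adj_mat_def cofactor_def by auto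
  then have "degree (adj_mat M $$ (l,j)) = degree (det (mat_delete M j l))"
    by (cases "even (j+l)") (auto simp: degree_minus)
  ultimately show ?thesis using lj unfolding M_def by linarith
qed

lemma cayley_hamilton_entry:
  fixes A :: "'a::comm_ring_1 mat"
  assumes A: "A \<in> carrier_mat n n" and i: "i < n" and j: "j < n"
  shows "(\<Sum>s\<le>n. coeff (char_poly A) s * (A ^\<^sub>m s) $$ (i,j)) = 0"
proof -
  define c where "c s = coeff (char_poly A) s" for s
  define b where "b s l j = coeff (adj_mat (char_poly_matrix A) $$ (l,j)) s" for s l j
  note recurrence = coeff_char_poly_matrix_mult_adj[OF A, folded b_def c_def]
  \<comment> \<open>telescoping: the partial sums of \<open>\<chi>\<^sub>A(A)\<close> are expressed through the adjugate coefficients\<close>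
  have "(\<Sum>s\<le>N. c s * (A ^\<^sub>m s) $$ (i,j)) = - (\<Sum>l<n. (A ^\<^sub>m Suc N) $$ (i,l) * b N l j)" for N
  proof (induction N)
    case 0
    show ?case using recurrence[OF i j, of 0] A i j by (auto intro!: sum.cong)
  next
    case (Suc N)
    have "c (Suc N) * (A ^\<^sub>m Suc N) $$ (i,j)
        = (\<Sum>m<n. (A ^\<^sub>m Suc N) $$ (i,m) * (if m = j then c (Suc N) else 0))"
      using j by (simp add: if_distrib cong: if_cong)
    also have "\<dots> = (\<Sum>m<n. (A ^\<^sub>m Suc N) $$ (i,m) * (b N m j - (\<Sum>l<n. A $$ (m,l) * b (Suc N) l j)))"
      using recurrence[OF _ j, of _ "Suc N"] by (intro sum.cong) auto
    also have "\<dots> = (\<Sum>m<n. (A ^\<^sub>m Suc N) $$ (i,m) * b N m j)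
        - (\<Sum>m<n. \<Sum>l<n. (A ^\<^sub>m Suc N) $$ (i,m) * A $$ (m,l) * b (Suc N) l j)"
      by (simp add: right_diff_distrib sum_subtractf sum_distrib_left mult.assoc)
    also have "(\<Sum>m<n. \<Sum>l<n. (A ^\<^sub>m Suc N) $$ (i,m) * A $$ (m,l) * b (Suc N) l j)
        = (\<Sum>l<n. (A ^\<^sub>m Suc (Suc N)) $$ (i,l) * b (Suc N) l j)"
    proof (subst sum.swap, rule sum.cong[OF refl])
      fix l assume "l \<in> {..<n}"
      then have l: "l < n" by simp
      show "(\<Sum>m<n. (A ^\<^sub>m Suc N) $$ (i,m) * A $$ (m,l) * b (Suc N) l j)
          = (A ^\<^sub>m Suc (Suc N)) $$ (i,l) * b (Suc N) l j"
        unfolding index_pow_mat_Suc[OF A i l, of "Suc N"] sum_distrib_right ..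
    qed
    finally show ?case using Suc by simp
  qed
  moreover have "b n l j = 0" if "l < n" for l
    unfolding b_def using degree_adj_char_poly_matrix[OF A that j] by (simp add: coeff_eq_0)
  ultimately show ?thesis unfolding c_def by simp
qed

lemma cayley_hamilton_entry_monom_mult:
  fixes A :: "'a::comm_ring_1 mat"
  assumes A: "A \<in> carrier_mat n n" and i: "i < n" and j: "j < n"
  shows "(\<Sum>s\<le>n + d. coeff (monom 1 d * char_poly A) s * (A ^\<^sub>m s) $$ (i,j)) = 0"
proof -
  define c where "c t = coeff (char_poly A) t" for t
  have "(\<Sum>s\<le>n + d. coeff (monom 1 d * char_poly A) s * (A ^\<^sub>m s) $$ (i,j))
      = (\<Sum>s\<in>{d..n + d}. c (s - d) * (A ^\<^sub>m s) $$ (i,j))"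
    by (rule sum.mono_neutral_cong_right) (auto simp: coeff_monom_mult c_def)
  also have "\<dots> = (\<Sum>t\<le>n. c t * (A ^\<^sub>m (d + t)) $$ (i,j))"
    using sum.shift_bounds_cl_nat_ivl[of "\<lambda>s. c (s - d) * (A ^\<^sub>m s) $$ (i,j)" 0 d n]
    by (simp add: atMost_atLeast0 add.commute)
  also have "\<dots> = (\<Sum>t\<le>n. \<Sum>l<n. (A ^\<^sub>m d) $$ (i,l) * (c t * (A ^\<^sub>m t) $$ (l,j)))"
  proof (rule sum.cong[OF refl])
    fix t
    show "c t * (A ^\<^sub>m (d + t)) $$ (i,j) = (\<Sum>l<n. (A ^\<^sub>m d) $$ (i,l) * (c t * (A ^\<^sub>m t) $$ (l,j)))"
      unfolding pow_mat_add[OF A] index_mult_mat_sum[OF pow_carrier_mat[OF A] pow_carrier_mat[OF A] i j]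
      by (simp add: sum_distrib_left ac_simps)
  qed
  also have "\<dots> = (\<Sum>l<n. (A ^\<^sub>m d) $$ (i,l) * (\<Sum>t\<le>n. c t * (A ^\<^sub>m t) $$ (l,j)))"
    by (subst sum.swap) (simp add: sum_distrib_left)
  also have "\<dots> = 0"
    using cayley_hamilton_entry[OF A _ j] unfolding c_def by simp
  finally show ?thesis .
qed

section \<open>Skew-symmetric integer matrices\<close>

definition skew_symmetric :: "nat \<Rightarrow> 'a::ring_1 mat \<Rightarrow> bool" where
  "skew_symmetric n S \<longleftrightarrow> S \<in> carrier_mat n n \<and> (\<forall>i<n. \<forall>j<n. S $$ (j,i) = - S $$ (i,j))"

lemma skew_symmetricD:
  assumes "skew_symmetric n S"
  shows "S \<in> carrier_mat n n" and "i < n \<Longrightarrow> j < n \<Longrightarrow> S $$ (j,i) = - S $$ (i,j)"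
  using assms unfolding skew_symmetric_def by blast+

lemma skew_symmetric_pow_entry:
  fixes S :: "'a::comm_ring_1 mat"
  assumes sk: "skew_symmetric n S" and ij: "i < n" "j < n"
  shows "(S ^\<^sub>m t) $$ (j,i) = (-1)^t * (S ^\<^sub>m t) $$ (i,j)"
  using ij
proof (induction t arbitrary: i j)
  case 0
  then show ?case using skew_symmetricD(1)[OF sk] by simp
next
  case (Suc t)
  have S: "S \<in> carrier_mat n n" using skew_symmetricD(1)[OF sk] .
  have S_entry: "S $$ (l,i) = - S $$ (i,l)" if "l < n" for l
    using skew_symmetricD(2)[OF sk Suc.prems(1) that] .
  have "(S ^\<^sub>m Suc t) $$ (j,i) = (\<Sum>l<n. (S ^\<^sub>m t) $$ (j,l) * S $$ (l,i))"
    using index_pow_mat_Suc[OF S Suc.prems(2,1)] .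
  also have "\<dots> = (-1)^Suc t * (\<Sum>l<n. S $$ (i,l) * (S ^\<^sub>m t) $$ (l,j))"
    using Suc.IH[OF _ Suc.prems(2)] S_entry by (simp add: sum_distrib_left ac_simps)
  also have "(\<Sum>l<n. S $$ (i,l) * (S ^\<^sub>m t) $$ (l,j)) = (S ^\<^sub>m Suc t) $$ (i,j)"
    using index_mult_mat_sum[OF S pow_carrier_mat[OF S] Suc.prems] pow_mat_Suc_left[OF S] by simp
  finally show ?case .
qed

lemma skew_symmetric_odd_pow_diag:
  fixes S :: "'a::linordered_idom mat"
  assumes sk: "skew_symmetric n S" and i: "i < n"
  shows "(S ^\<^sub>m (2 * r + 1)) $$ (i,i) = 0"
proof -
  have "(-1 :: 'a) ^ (2 * r + 1) = -1" by simp
  then have "(S ^\<^sub>m (2 * r + 1)) $$ (i,i) = - (S ^\<^sub>m (2 * r + 1)) $$ (i,i)"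
    using skew_symmetric_pow_entry[OF sk i i, of "2 * r + 1"] by (simp only: mult_minus1)
  then show ?thesis by simp
qed

lemma skew_symmetric_even_pow_diag_parity:
  fixes S :: "int mat"
  assumes sk: "skew_symmetric n S" and i: "i < n"
  shows "even ((\<Sum>l<n. (S ^\<^sub>m r) $$ (i,l)) - (S ^\<^sub>m (2 * r)) $$ (i,i))"
proof -
  have S: "S \<in> carrier_mat n n" using skew_symmetricD(1)[OF sk] .
  have "(S ^\<^sub>m (2 * r)) $$ (i,i) = (\<Sum>l<n. (S ^\<^sub>m r) $$ (i,l) * (S ^\<^sub>m r) $$ (l,i))"
    using pow_mat_add[OF S, of r r] index_mult_mat_sum[OF pow_carrier_mat[OF S] pow_carrier_mat[OF S] i i]
    by (simp add: mult_2)
  also have "\<dots> = (\<Sum>l<n. (-1)^r * ((S ^\<^sub>m r) $$ (i,l))\<^sup>2)"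
  proof (rule sum.cong[OF refl])
    fix l assume "l \<in> {..<n}"
    then show "(S ^\<^sub>m r) $$ (i,l) * (S ^\<^sub>m r) $$ (l,i) = (-1)^r * ((S ^\<^sub>m r) $$ (i,l))\<^sup>2"
      using skew_symmetric_pow_entry[OF sk i, of l r] by (simp add: power2_eq_square)
  qed
  finally have "(\<Sum>l<n. (S ^\<^sub>m r) $$ (i,l)) - (S ^\<^sub>m (2 * r)) $$ (i,i)
      = (\<Sum>l<n. (S ^\<^sub>m r) $$ (i,l) - (-1)^r * ((S ^\<^sub>m r) $$ (i,l))\<^sup>2)"
    by (simp add: sum_subtractf)
  moreover have "even (x - (-1)^r * x\<^sup>2)" for x :: int
    by (cases "even r") (auto simp: power2_eq_square)
  ultimately show ?thesis by (simp add: dvd_sum)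
qed

definition even_coeff :: "nat \<Rightarrow> int poly \<Rightarrow> nat \<Rightarrow> int" where
  "even_coeff n f r = coeff (monom 1 (n mod 2) * f) (2 * r)"

text \<open>For skew-symmetric \<open>S\<close> the polynomial \<open>x\<^bsup>n mod 2\<^esup> \<chi>\<^sub>S(x)\<close> is even, say \<open>h(x\<^sup>2)\<close>, and the
  lemma says that \<open>h(S) e\<close> is an even vector: it is the diagonal of Cayley-Hamilton read modulo 2.\<close>
lemma skew_symmetric_even_coeff_parity:
  fixes S :: "int mat"
  assumes sk: "skew_symmetric n S" and i: "i < n"
  shows "even (\<Sum>r\<le>(n + 1) div 2. even_coeff n (char_poly S) r * (\<Sum>l<n. (S ^\<^sub>m r) $$ (i,l)))"
proof -
  define k where "k = (n + 1) div 2"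
  define h where "h r = even_coeff n (char_poly S) r" for r
  have S: "S \<in> carrier_mat n n" using skew_symmetricD(1)[OF sk] .
  have "2 * k = n + n mod 2" unfolding k_def by presburger
  then have "(\<Sum>s\<le>2 * k. coeff (monom 1 (n mod 2) * char_poly S) s * (S ^\<^sub>m s) $$ (i,i)) = 0"
    using cayley_hamilton_entry_monom_mult[OF S i i, of "n mod 2"] by simp
  then have diag: "(\<Sum>r\<le>k. h r * (S ^\<^sub>m (2 * r)) $$ (i,i)) = 0"
    unfolding sum_atMost_even_odd skew_symmetric_odd_pow_diag[OF sk i] h_def even_coeff_def by simp
  have "even (\<Sum>r\<le>k. h r * ((\<Sum>l<n. (S ^\<^sub>m r) $$ (i,l)) - (S ^\<^sub>m (2 * r)) $$ (i,i)))"
    using skew_symmetric_even_pow_diag_parity[OF sk i] by (simp add: dvd_sum)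
  then show ?thesis
    using diag unfolding k_def[symmetric] h_def[symmetric]
    by (simp add: right_diff_distrib sum_subtractf)
qed

section \<open>The level of a rational matrix\<close>

lemma integral_mat_smult_iff:
  "integral_mat (of_nat k \<cdot>\<^sub>m Q) \<longleftrightarrow> (\<forall>i<dim_row Q. \<forall>j<dim_col Q. of_nat k * Q $$ (i,j) \<in> \<int>)"
  unfolding integral_mat_def by auto

lemma integral_mat_mult:
  assumes A: "A \<in> carrier_mat nr n" and B: "B \<in> carrier_mat n nc"
    and "integral_mat (of_nat a \<cdot>\<^sub>m A)" and "integral_mat (of_nat b \<cdot>\<^sub>m B)"
  shows "integral_mat (of_nat (a * b) \<cdot>\<^sub>m (A * B))"
  unfolding integral_mat_smult_iff
proof (intro allI impI)
  fix i j assume "i < dim_row (A * B)" "j < dim_col (A * B)"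
  then have ij: "i < nr" "j < nc" using A B by auto
  have "of_nat (a * b) * (A * B) $$ (i,j) = (\<Sum>l<n. (of_nat a * A $$ (i,l)) * (of_nat b * B $$ (l,j)))"
    unfolding index_mult_mat_sum[OF A B ij] by (simp add: sum_distrib_left ac_simps)
  also have "\<dots> \<in> \<int>"
  proof (intro Ints_sum, rule Ints_mult)
    fix l assume "l \<in> {..<n}"
    then show "of_nat a * A $$ (i,l) \<in> \<int>" "of_nat b * B $$ (l,j) \<in> \<int>"
      using assms(3,4) A B ij unfolding integral_mat_smult_iff by auto
  qed
  finally show "of_nat (a * b) * (A * B) $$ (i,j) \<in> \<int>" .
qed

lemma integral_mat_of_int:
  assumes "integral_mat A"
  shows "\<exists>B. A = map_mat of_int B"
proof
  show "A = map_mat of_int (map_mat floor A)"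
    using assms unfolding integral_mat_def by (intro eq_matI) auto
qed

lemma level_exists: "\<exists>k>0. integral_mat (of_nat k \<cdot>\<^sub>m (Q :: rat mat))"
proof -
  define D where "D = (\<Prod>p\<in>{0..<dim_row Q} \<times> {0..<dim_col Q}. nat (snd (quotient_of (Q $$ p))))"
  have "D > 0" unfolding D_def using quotient_of_denom_pos' by (intro prod_pos) simp
  moreover have "of_nat D * Q $$ (i,j) \<in> \<int>" if "i < dim_row Q" "j < dim_col Q" for i j
  proof -
    obtain a b where ab: "quotient_of (Q $$ (i,j)) = (a,b)" by fastforce
    have "nat (snd (quotient_of (Q $$ (i,j)))) dvd D"
      unfolding D_def using that by (intro dvd_prodI[of _ "(i,j)" "\<lambda>p. nat (snd (quotient_of (Q $$ p)))"]) auto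
    then have "nat b dvd D" using ab by simp
    then obtain e where "D = nat b * e" by blast
    then have "of_nat D * Q $$ (i,j) = of_int (a * int e)"
      using quotient_of_div[OF ab] quotient_of_denom_pos[OF ab] by simp
    then show ?thesis by simp
  qed
  ultimately show ?thesis unfolding integral_mat_smult_iff by blast
qed

lemma level_pos: "level Q > 0"
  and level_integral: "integral_mat (of_nat (level Q) \<cdot>\<^sub>m Q)"
proof -
  from level_exists[of Q] obtain k where "k > 0 \<and> integral_mat (of_nat k \<cdot>\<^sub>m Q)" by blast
  then have "level Q > 0 \<and> integral_mat (of_nat (level Q) \<cdot>\<^sub>m Q)"
    unfolding level_def by (rule LeastI)
  then show "level Q > 0" "integral_mat (of_nat (level Q) \<cdot>\<^sub>m Q)" by auto
qed

lemma level_le: "k > 0 \<Longrightarrow> integral_mat (of_nat k \<cdot>\<^sub>m Q) \<Longrightarrow> level Q \<le> k"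
  unfolding level_def by (rule Least_le) simp

lemma level_dvd:
  assumes k: "k > 0" and int_k: "integral_mat (of_nat k \<cdot>\<^sub>m Q)"
  shows "level Q dvd k"
proof (rule ccontr)
  assume "\<not> level Q dvd k"
  then have r: "k mod level Q > 0" by (simp add: mod_greater_zero_iff_not_dvd)
  have "integral_mat (of_nat (k mod level Q) \<cdot>\<^sub>m Q)" unfolding integral_mat_smult_iff
  proof (intro allI impI)
    fix i j assume ij: "i < dim_row Q" "j < dim_col Q"
    have "(of_nat k :: rat) = of_nat (k mod level Q) + of_nat (k div level Q) * of_nat (level Q)"
      by (metis div_mult_mod_eq of_nat_add of_nat_mult add.commute)
    then have "of_nat (k mod level Q) * Q $$ (i,j)
        = of_nat k * Q $$ (i,j) - of_nat (k div level Q) * (of_nat (level Q) * Q $$ (i,j))"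
      by (simp add: algebra_simps)
    also have "\<dots> \<in> \<int>"
      using int_k level_integral[of Q] ij unfolding integral_mat_smult_iff
      by (metis Ints_diff Ints_mult Ints_of_nat)
    finally show "of_nat (k mod level Q) * Q $$ (i,j) \<in> \<int>" .
  qed
  from level_le[OF r this] show False using level_pos[of Q] mod_less_divisor[of "level Q" k] by linarith
qed

lemma level_mult_dvd:
  assumes "A \<in> carrier_mat nr n" and "B \<in> carrier_mat n nc"
  shows "level (A * B) dvd level A * level B"
  using integral_mat_mult[OF assms level_integral level_integral] level_pos[of A] level_pos[of B]
  by (intro level_dvd) simp_all

lemma adj_mat_of_int:
  fixes A :: "int mat"
  assumes A: "A \<in> carrier_mat n n"
  shows "adj_mat (map_mat (of_int :: int \<Rightarrow> rat) A) = map_mat of_int (adj_mat A)"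
proof (rule eq_matI)
  fix i j assume "i < dim_row (map_mat (of_int :: int \<Rightarrow> rat) (adj_mat A))"
    "j < dim_col (map_mat (of_int :: int \<Rightarrow> rat) (adj_mat A))"
  then have ij: "i < n" "j < n" using adj_mat(1)[OF A] by auto
  have "mat_delete (map_mat (of_int :: int \<Rightarrow> rat) A) j i = map_mat of_int (mat_delete A j i)"
    using A by (intro eq_matI) (auto simp: mat_delete_def)
  then show "adj_mat (map_mat of_int A) $$ (i,j) = map_mat (of_int :: int \<Rightarrow> rat) (adj_mat A) $$ (i,j)"
    using ij A unfolding adj_mat_def cofactor_def by (simp add: of_int_hom.hom_det)
qed (use A in \<open>auto simp: adj_mat_def\<close>)

lemma level_dvd_det:
  fixes Q :: "rat mat" and A B :: "int mat"
  assumes Q: "Q \<in> carrier_mat n n" and A: "A \<in> carrier_mat n n" and B: "B \<in> carrier_mat n n"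
    and QA: "transpose_mat Q * map_mat of_int A = map_mat of_int B" and det: "det A \<noteq> 0"
  shows "level Q dvd nat \<bar>det A\<bar>"
proof (rule level_dvd)
  have Qt: "transpose_mat Q \<in> carrier_mat n n" using Q by simp
  have A': "map_mat (of_int :: int \<Rightarrow> rat) A \<in> carrier_mat n n" using A by simp
  have "of_int (det A) \<cdot>\<^sub>m transpose_mat Q = transpose_mat Q * (map_mat of_int A * adj_mat (map_mat of_int A))"
    unfolding adj_mat(2)[OF A'] of_int_hom.hom_det mult_smult_distrib[OF Qt one_carrier_mat]
    using Qt by simp
  also have "\<dots> = map_mat of_int (B * adj_mat A)"
    using Qt A' B A adj_mat(1)[OF A']
    by (simp add: assoc_mult_mat[symmetric, of _ n n _ n _ n] QA adj_mat_of_int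
        of_int_hom.mat_hom_mult[OF B adj_mat(1)[OF A]])
  finally have e: "of_int (det A) \<cdot>\<^sub>m transpose_mat Q = map_mat of_int (B * adj_mat A)" .
  show "integral_mat (of_nat (nat \<bar>det A\<bar>) \<cdot>\<^sub>m Q)" unfolding integral_mat_smult_iff
  proof (intro allI impI)
    fix i j assume "i < dim_row Q" "j < dim_col Q"
    then have ij: "i < n" "j < n" using Q by auto
    have "of_int (det A) * Q $$ (i,j) = of_int ((B * adj_mat A) $$ (j,i))"
      using arg_cong[OF e, of "\<lambda>M. M $$ (j,i)"] ij Q B adj_mat(1)[OF A] by simp
    moreover have "(of_nat (nat \<bar>det A\<bar>) :: rat) = of_int (sgn (det A) * det A)"
      by (cases "det A \<ge> 0") (auto simp: sgn_if)
    ultimately have "of_nat (nat \<bar>det A\<bar>) * Q $$ (i,j) = of_int (sgn (det A) * (B * adj_mat A) $$ (j,i))"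
      by (simp add: mult.assoc)
    then show "of_nat (nat \<bar>det A\<bar>) * Q $$ (i,j) \<in> \<int>" by simp
  qed
qed (use det in simp)

lemma map_mat_of_int_smult: "map_mat (of_int :: int \<Rightarrow> 'a::ring_1) (k \<cdot>\<^sub>m M) = of_int k \<cdot>\<^sub>m map_mat of_int M"
  by (rule eq_matI) simp_all

lemma map_mat_eq_smult_dims:
  assumes "map_mat f X = a \<cdot>\<^sub>m Q"
  shows "dim_row X = dim_row Q" and "dim_col X = dim_col Q"
  using arg_cong[OF assms, of dim_row] arg_cong[OF assms, of dim_col] by simp_all

lemma transpose_mult_scaled:
  fixes Q :: "rat mat" and A B X :: "int mat"
  assumes Q: "Q \<in> carrier_mat n n" and A: "A \<in> carrier_mat n m" and B: "B \<in> carrier_mat n m"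
    and QA: "transpose_mat Q * map_mat of_int A = map_mat of_int B"
    and X: "map_mat of_int X = of_int k \<cdot>\<^sub>m Q"
  shows "transpose_mat A * X = k \<cdot>\<^sub>m transpose_mat B"
proof (rule of_int_hom.mat_hom_inj)
  have Xc: "X \<in> carrier_mat n n" using map_mat_eq_smult_dims[OF X] Q by auto
  have "map_mat of_int (transpose_mat A * X) = transpose_mat (map_mat of_int A) * (of_int k \<cdot>\<^sub>m Q)"
    using A Xc by (simp add: of_int_hom.mat_hom_mult[of _ m n _ n] map_mat_transpose X)
  also have "\<dots> = of_int k \<cdot>\<^sub>m transpose_mat (transpose_mat Q * map_mat of_int A)"
    using A Q by (simp add: mult_smult_distrib[of _ m n _ n] transpose_mult[of _ n n _ m])
  also have "\<dots> = map_mat of_int (k \<cdot>\<^sub>m transpose_mat B)"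
    unfolding QA by (simp add: map_mat_of_int_smult map_mat_transpose)
  finally show "map_mat of_int (transpose_mat A * X) = map_mat (of_int :: int \<Rightarrow> rat) (k \<cdot>\<^sub>m transpose_mat B)" .
qed

lemma map_mat_transpose_mult_scaled:
  fixes Q Q' :: "rat mat" and X Y :: "int mat"
  assumes Q: "Q \<in> carrier_mat n n" and Q': "Q' \<in> carrier_mat n n"
    and X: "map_mat of_int X = of_int k \<cdot>\<^sub>m Q" and Y: "map_mat of_int Y = of_int k' \<cdot>\<^sub>m Q'"
  shows "map_mat of_int (transpose_mat Y * X) = of_int (k' * k) \<cdot>\<^sub>m (transpose_mat Q' * Q)"
proof -
  have Xc: "X \<in> carrier_mat n n" and Yc: "Y \<in> carrier_mat n n"
    using map_mat_eq_smult_dims[OF X] map_mat_eq_smult_dims[OF Y] Q Q' by auto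
  have "map_mat of_int (transpose_mat Y * X) = transpose_mat (of_int k' \<cdot>\<^sub>m Q') * (of_int k \<cdot>\<^sub>m Q)"
    using Xc Yc by (simp add: of_int_hom.mat_hom_mult[of _ n n _ n] map_mat_transpose[symmetric] X Y)
  also have "transpose_mat (of_int k' \<cdot>\<^sub>m Q') = of_int k' \<cdot>\<^sub>m transpose_mat Q'"
    by (rule eq_matI) auto
  also have "(of_int k' \<cdot>\<^sub>m transpose_mat Q') * (of_int k \<cdot>\<^sub>m Q) = of_int k \<cdot>\<^sub>m (of_int k' \<cdot>\<^sub>m (transpose_mat Q' * Q))"
    using Q Q' by (simp add: mult_smult_distrib[of _ n n _ n] mult_smult_assoc_mat[of _ n n _ n])
  also have "\<dots> = of_int (k' * k) \<cdot>\<^sub>m (transpose_mat Q' * Q)"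
    by (rule eq_matI) auto
  finally show ?thesis .
qed

lemma transpose_mult_scaled_orthogonal:
  fixes Q :: "rat mat" and X :: "int mat"
  assumes Q: "Q \<in> carrier_mat n n" and QtQ: "transpose_mat Q * Q = 1\<^sub>m n"
    and X: "map_mat of_int X = of_int k \<cdot>\<^sub>m Q"
  shows "transpose_mat X * X = (k * k) \<cdot>\<^sub>m 1\<^sub>m n"
proof (rule of_int_hom.mat_hom_inj)
  show "map_mat of_int (transpose_mat X * X) = map_mat (of_int :: int \<Rightarrow> rat) ((k * k) \<cdot>\<^sub>m 1\<^sub>m n)"
    unfolding map_mat_transpose_mult_scaled[OF Q Q X X] QtQ map_mat_of_int_smult
    by (simp add: of_int_hom.mat_hom_one)
qed

section \<open>Walk matrices of oriented graphs\<close>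

definition skew_adj_int :: "nat \<Rightarrow> (nat \<Rightarrow> nat \<Rightarrow> bool) \<Rightarrow> int mat" where
  "skew_adj_int n arc = mat n n (\<lambda>(i,j). if arc i j then 1 else if arc j i then -1 else 0)"

lemma skew_adj_int_carrier [simp]: "skew_adj_int n arc \<in> carrier_mat n n"
  unfolding skew_adj_int_def by simp

lemma skew_adj_carrier [simp]: "skew_adj n arc \<in> carrier_mat n n"
  unfolding skew_adj_def by simp

lemma skew_adj_eq_of_int: "skew_adj n arc = map_mat of_int (skew_adj_int n arc)"
  unfolding skew_adj_def skew_adj_int_def by (rule eq_matI) auto

lemma skew_symmetric_skew_adj_int:
  assumes "oriented_graph n arc"
  shows "skew_symmetric n (skew_adj_int n arc)"
  using assms unfolding skew_symmetric_def oriented_graph_def skew_adj_int_def by auto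

lemma char_poly_skew_adj_int_eq:
  assumes "char_poly (skew_adj n A) = char_poly (skew_adj n B)"
  shows "char_poly (skew_adj_int n A) = char_poly (skew_adj_int n B)"
proof -
  have "map_poly (of_int :: int \<Rightarrow> rat) (char_poly (skew_adj_int n A))
      = map_poly of_int (char_poly (skew_adj_int n B))"
    using assms unfolding skew_adj_eq_of_int of_int_hom.char_poly_hom[OF skew_adj_int_carrier] .
  then show ?thesis by (intro poly_eqI) (metis coeff_map_poly of_int_0 of_int_eq_iff)
qed

lemma ones_vec_carrier [simp]: "ones_vec n \<in> carrier_vec n"
  unfolding ones_vec_def by simp

lemma walk_mat_carrier [simp]: "walk_mat n arc \<in> carrier_mat n n"
  unfolding walk_mat_def carrier_mat_def by simp

lemma walk_mat_dim [simp]: "dim_row (walk_mat n arc) = n" "dim_col (walk_mat n arc) = n"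
  unfolding walk_mat_def by simp_all

lemma walk_mat_entry:
  assumes "i < n" "t < n"
  shows "walk_mat n arc $$ (i,t) = ((skew_adj n arc ^\<^sub>m t) *\<^sub>v ones_vec n) $ i"
  using assms unfolding walk_mat_def by (simp add: mat_of_cols_index)

lemma walk_mat_entry_int:
  assumes i: "i < n" and t: "t < n"
  shows "walk_mat n arc $$ (i,t) = of_int (\<Sum>l<n. (skew_adj_int n arc ^\<^sub>m t) $$ (i,l))"
proof -
  have pow: "skew_adj n arc ^\<^sub>m t = map_mat of_int (skew_adj_int n arc ^\<^sub>m t)"
    unfolding skew_adj_eq_of_int by (rule of_int_hom.mat_hom_pow[OF skew_adj_int_carrier, symmetric])
  have "walk_mat n arc $$ (i,t) = (\<Sum>l<n. (skew_adj n arc ^\<^sub>m t) $$ (i,l) * ones_vec n $ l)"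
    unfolding walk_mat_entry[OF assms]
    by (rule index_mult_mat_vec_sum[OF pow_carrier_mat[OF skew_adj_carrier] ones_vec_carrier i])
  also have "\<dots> = of_int (\<Sum>l<n. (skew_adj_int n arc ^\<^sub>m t) $$ (i,l))"
    unfolding pow using i
    by (auto simp: ones_vec_def carrier_matD[OF skew_adj_int_carrier] intro!: sum.cong)
  finally show ?thesis .
qed

lemma col_walk_mat:
  assumes "t < n"
  shows "col (walk_mat n arc) t = skew_adj n arc ^\<^sub>m t *\<^sub>v ones_vec n"
proof -
  let ?v = "\<lambda>k. skew_adj n arc ^\<^sub>m k *\<^sub>v ones_vec n"
  have "?v t \<in> carrier_vec n"
    by (rule mult_mat_vec_carrier[OF pow_carrier_mat[OF skew_adj_carrier] ones_vec_carrier])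
  then have "col (mat_of_cols n (map ?v [0..<n])) t = map ?v [0..<n] ! t"
    using assms by (intro col_mat_of_cols) simp_all
  then show ?thesis using assms unfolding walk_mat_def by simp
qed

lemma orthogonal_conj_intertwine:
  fixes Q S S' :: "'a::field mat"
  assumes Q: "Q \<in> carrier_mat n n" and S: "S \<in> carrier_mat n n"
    and QtQ: "transpose_mat Q * Q = 1\<^sub>m n" and conj: "transpose_mat Q * S * Q = S'"
  shows "transpose_mat Q * S = S' * transpose_mat Q"
proof -
  have Qt: "transpose_mat Q \<in> carrier_mat n n" using Q by simp
  have "S' * transpose_mat Q = transpose_mat Q * S * (Q * transpose_mat Q)"
    using Q Qt S unfolding conj[symmetric] by (simp add: assoc_mult_mat[of _ n n _ n _ n])
  also have "Q * transpose_mat Q = 1\<^sub>m n" by (rule mat_mult_left_right_inverse[OF Qt Q QtQ])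
  finally show ?thesis using Qt S by simp
qed

lemma walk_mat_transport:
  assumes Q: "regular_rat_orth n Q"
    and conj: "transpose_mat Q * skew_adj n a1 * Q = skew_adj n a2"
  shows "transpose_mat Q * walk_mat n a1 = walk_mat n a2"
proof -
  define S1 where "S1 = skew_adj n a1"
  define S2 where "S2 = skew_adj n a2"
  have Qc: "Q \<in> carrier_mat n n" and QtQ: "transpose_mat Q * Q = 1\<^sub>m n"
    and Qe: "Q *\<^sub>v ones_vec n = ones_vec n"
    using Q unfolding regular_rat_orth_def by auto
  have Qt: "transpose_mat Q \<in> carrier_mat n n" using Qc by simp
  have S1: "S1 \<in> carrier_mat n n" and S2: "S2 \<in> carrier_mat n n" unfolding S1_def S2_def by auto
  note intertwine = pow_mat_intertwine[OF Qt S1 S2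
      orthogonal_conj_intertwine[OF Qc S1 QtQ conj[folded S1_def S2_def]]]
  have "transpose_mat Q *\<^sub>v ones_vec n = (transpose_mat Q * Q) *\<^sub>v ones_vec n"
    using Qt Qc by (simp add: Qe)
  then have Qte: "transpose_mat Q *\<^sub>v ones_vec n = ones_vec n" unfolding QtQ by simp
  show ?thesis
  proof (rule mat_col_eqI)
    fix t assume "t < dim_col (walk_mat n a2)"
    then have t: "t < n" by simp
    have "col (transpose_mat Q * walk_mat n a1) t = transpose_mat Q *\<^sub>v (S1 ^\<^sub>m t *\<^sub>v ones_vec n)"
      unfolding col_mult2[OF Qt walk_mat_carrier t] col_walk_mat[OF t] S1_def ..
    also have "\<dots> = (transpose_mat Q * S1 ^\<^sub>m t) *\<^sub>v ones_vec n"
      by (rule assoc_mult_mat_vec[symmetric, OF Qt pow_carrier_mat[OF S1] ones_vec_carrier])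
    also have "\<dots> = S2 ^\<^sub>m t *\<^sub>v ones_vec n"
      unfolding intertwine assoc_mult_mat_vec[OF pow_carrier_mat[OF S2] Qt ones_vec_carrier] Qte ..
    finally show "col (transpose_mat Q * walk_mat n a1) t = col (walk_mat n a2) t"
      using t by (simp add: col_walk_mat S2_def)
  qed (use Qt in auto)
qed

text \<open>With \<open>k = \<lceil>n/2\<rceil>\<close>, the matrix \<open>W * reduction_mat n \<chi>\<^sub>S\<close> has the columns \<open>e, Se, \<dots>, S\<^bsup>k-1\<^esup>e\<close>
  followed by \<open>S\<^sup>d h(S) e / 2\<close> for \<open>d < \<lfloor>n/2\<rfloor>\<close>, where \<open>x\<^bsup>n mod 2\<^esup> \<chi>\<^sub>S(x) = h(x\<^sup>2)\<close>.\<close>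
definition reduction_mat :: "nat \<Rightarrow> int poly \<Rightarrow> rat mat" where
  "reduction_mat n f = mat n n (\<lambda>(i,j).
     if j < (n + 1) div 2 then of_bool (i = j)
     else if j - (n + 1) div 2 \<le> i \<and> i \<le> j then of_int (even_coeff n f (i - (j - (n + 1) div 2))) / 2
     else 0)"

definition reduced_walk_mat :: "nat \<Rightarrow> (nat \<Rightarrow> nat \<Rightarrow> bool) \<Rightarrow> rat mat" where
  "reduced_walk_mat n arc = walk_mat n arc * reduction_mat n (char_poly (skew_adj_int n arc))"

lemma reduction_mat_carrier [simp]: "reduction_mat n f \<in> carrier_mat n n"
  unfolding reduction_mat_def by simp

lemma reduction_mat_dim [simp]:
  "dim_row (reduction_mat n f) = n" "dim_col (reduction_mat n f) = n"
  unfolding reduction_mat_def by simp_all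

lemma reduced_walk_mat_carrier [simp]: "reduced_walk_mat n arc \<in> carrier_mat n n"
  unfolding reduced_walk_mat_def by (rule mult_carrier_mat[OF walk_mat_carrier reduction_mat_carrier])

lemma det_reduction_mat:
  assumes "coeff f n = 1"
  shows "det (reduction_mat n f) = 1 / 2 ^ (n div 2)"
proof -
  define k where "k = (n + 1) div 2"
  have "2 * k - n mod 2 = n" unfolding k_def by presburger
  then have top: "even_coeff n f k = 1"
    using assms unfolding even_coeff_def by (simp add: coeff_monom_mult)
  have "upper_triangular (reduction_mat n f)"
    unfolding reduction_mat_def by auto
  then have "det (reduction_mat n f) = prod_list (diag_mat (reduction_mat n f))"
    by (rule det_upper_triangular[OF _ reduction_mat_carrier])
  also have "\<dots> = (\<Prod>j = 0..<n. reduction_mat n f $$ (j,j))"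
    using prod_list_diag_prod[of "reduction_mat n f"] by simp
  also have "\<dots> = (\<Prod>j = 0..<k. reduction_mat n f $$ (j,j)) * (\<Prod>j = k..<n. reduction_mat n f $$ (j,j))"
  proof -
    have "k \<le> n" unfolding k_def by simp
    then show ?thesis by (simp add: prod.atLeastLessThan_concat)
  qed
  also have "(\<Prod>j = 0..<k. reduction_mat n f $$ (j,j)) = 1"
    by (rule prod.neutral) (auto simp: reduction_mat_def k_def)
  also have "(\<Prod>j = k..<n. reduction_mat n f $$ (j,j)) = (\<Prod>j = k..<n. 1 / 2)"
    using top by (intro prod.cong) (auto simp: reduction_mat_def k_def)
  also have "\<dots> = 1 / 2 ^ (n div 2)"
  proof -
    have "n - k = n div 2" unfolding k_def by presburger
    then show ?thesis by (simp add: power_one_over)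
  qed
  finally show ?thesis by simp
qed

lemma index_mult_reduction_mat:
  fixes W :: "rat mat" and n :: nat
  defines "k \<equiv> (n + 1) div 2"
  assumes W: "W \<in> carrier_mat n n" and ij: "i < n" "j < n"
  shows "(W * reduction_mat n f) $$ (i,j) = (if j < k then W $$ (i,j)
    else (\<Sum>r\<le>k. W $$ (i, r + (j - k)) * of_int (even_coeff n f r)) / 2)"
proof -
  have prod: "(W * reduction_mat n f) $$ (i,j) = (\<Sum>t<n. W $$ (i,t) * reduction_mat n f $$ (t,j))"
    using index_mult_mat_sum[OF W reduction_mat_carrier ij] .
  show ?thesis
  proof (cases "j < k")
    case True
    have "(\<Sum>t<n. W $$ (i,t) * reduction_mat n f $$ (t,j)) = (\<Sum>t<n. if t = j then W $$ (i,t) else 0)"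
      using True ij by (intro sum.cong) (auto simp: reduction_mat_def k_def)
    then show ?thesis unfolding prod using True ij by simp
  next
    case False
    define d where "d = j - k"
    have j: "j = k + d" using False unfolding d_def by simp
    have "(\<Sum>t<n. W $$ (i,t) * reduction_mat n f $$ (t,j))
        = (\<Sum>t\<in>{0 + d..k + d}. W $$ (i,t) * of_int (even_coeff n f (t - d)) / 2)"
      using False ij unfolding j
      by (intro sum.mono_neutral_cong_right) (auto simp: reduction_mat_def k_def)
    also have "\<dots> = (\<Sum>r\<le>k. W $$ (i, r + d) * of_int (even_coeff n f r)) / 2"
      unfolding sum.shift_bounds_cl_nat_ivl by (simp add: atMost_atLeast0 sum_divide_distrib)
    finally show ?thesis unfolding prod d_def using False by simp
  qed
qed

lemma det_reduced_walk_mat: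
  "det (reduced_walk_mat n arc) = det (walk_mat n arc) / 2 ^ (n div 2)"
proof -
  have "coeff (char_poly (skew_adj_int n arc)) n = 1"
    using degree_monic_char_poly[OF skew_adj_int_carrier] by blast
  then show ?thesis
    unfolding reduced_walk_mat_def det_mult[OF walk_mat_carrier reduction_mat_carrier]
    by (simp add: det_reduction_mat)
qed

lemma reduced_walk_mat_entry:
  fixes n :: nat and arc :: "nat \<Rightarrow> nat \<Rightarrow> bool"
  defines "S \<equiv> skew_adj_int n arc" and "k \<equiv> (n + 1) div 2"
  assumes i: "i < n" and j: "j < n"
  shows "reduced_walk_mat n arc $$ (i,j) = (if j < k then of_int (\<Sum>m<n. (S ^\<^sub>m j) $$ (i,m))
    else of_int (\<Sum>l<n. (S ^\<^sub>m (j - k)) $$ (i,l)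
      * (\<Sum>r\<le>k. even_coeff n (char_poly S) r * (\<Sum>m<n. (S ^\<^sub>m r) $$ (l,m)))) / 2)"
proof -
  define h where "h r = even_coeff n (char_poly S) r" for r
  define row_sum where "row_sum t l = (\<Sum>m<n. (S ^\<^sub>m t) $$ (l,m))" for t l
  define d where "d = j - k"
  have S: "S \<in> carrier_mat n n" unfolding S_def by simp
  have entry: "reduced_walk_mat n arc $$ (i,j) = (if j < k then walk_mat n arc $$ (i,j)
      else (\<Sum>r\<le>k. walk_mat n arc $$ (i, r + d) * of_int (h r)) / 2)"
    unfolding reduced_walk_mat_def k_def d_def h_def S_def
    by (rule index_mult_reduction_mat[OF walk_mat_carrier i j])
  have "walk_mat n arc $$ (i, r + d) = of_int (\<Sum>l<n. (S ^\<^sub>m d) $$ (i,l) * row_sum r l)"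
    if "\<not> j < k" "r \<le> k" for r
  proof -
    have rd: "r + d < n" using that j unfolding d_def by linarith
    show ?thesis
      using walk_mat_entry_int[OF i rd, of arc] row_sum_pow_mat_add[OF S i, of d r]
      unfolding S_def row_sum_def by (simp only: add.commute)
  qed
  then have "\<not> j < k \<Longrightarrow> (\<Sum>r\<le>k. walk_mat n arc $$ (i, r + d) * of_int (h r))
      = of_int (\<Sum>r\<le>k. \<Sum>l<n. (S ^\<^sub>m d) $$ (i,l) * (h r * row_sum r l))"
    by (simp add: sum_distrib_left ac_simps)
  also have "\<dots> = of_int (\<Sum>l<n. (S ^\<^sub>m d) $$ (i,l) * (\<Sum>r\<le>k. h r * row_sum r l))"
    by (subst sum.swap) (simp add: sum_distrib_left)
  finally show ?thesis
    unfolding entry using i j by (simp add: walk_mat_entry_int S_def h_def row_sum_def d_def)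
qed

lemma integral_reduced_walk_mat:
  assumes og: "oriented_graph n arc"
  shows "integral_mat (reduced_walk_mat n arc)"
proof -
  define S where "S = skew_adj_int n arc"
  define k where "k = (n + 1) div 2"
  have "reduced_walk_mat n arc $$ (i,j) \<in> \<int>" if i: "i < n" and j: "j < n" for i j
  proof (cases "j < k")
    case True
    then show ?thesis unfolding reduced_walk_mat_entry[OF i j] k_def by (simp del: of_int_sum)
  next
    case False
    have "even (\<Sum>r\<le>k. even_coeff n (char_poly S) r * (\<Sum>m<n. (S ^\<^sub>m r) $$ (l,m)))" if "l < n" for l
      using skew_symmetric_even_coeff_parity[OF skew_symmetric_skew_adj_int[OF og] that]
      unfolding k_def S_def .
    then obtain w where "(\<Sum>l<n. (S ^\<^sub>m (j - k)) $$ (i,l)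
        * (\<Sum>r\<le>k. even_coeff n (char_poly S) r * (\<Sum>m<n. (S ^\<^sub>m r) $$ (l,m)))) = 2 * w"
      by (meson dvd_mult dvd_sum lessThan_iff dvdE)
    then show ?thesis
      using False unfolding reduced_walk_mat_entry[OF i j] S_def[symmetric] k_def[symmetric] by simp
  qed
  then show ?thesis unfolding integral_mat_def by (simp add: carrier_matD[OF reduced_walk_mat_carrier])
qed

lemma reduced_walk_mat_transport:
  assumes "regular_rat_orth n Q"
    and "transpose_mat Q * skew_adj n a1 * Q = skew_adj n a2"
    and "char_poly (skew_adj n a1) = char_poly (skew_adj n a2)"
  shows "transpose_mat Q * reduced_walk_mat n a1 = reduced_walk_mat n a2"
proof -
  have "Q \<in> carrier_mat n n" using assms(1) unfolding regular_rat_orth_def by simp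
  then show ?thesis
    unfolding reduced_walk_mat_def char_poly_skew_adj_int_eq[OF assms(3)]
    by (simp add: assoc_mult_mat[of _ n n _ n _ n, symmetric] walk_mat_transport[OF assms(1,2)])
qed

lemma reduced_walk_mat_of_int:
  assumes "oriented_graph n arc"
  obtains A where "A \<in> carrier_mat n n" and "map_mat of_int A = reduced_walk_mat n arc"
  using integral_mat_of_int[OF integral_reduced_walk_mat[OF assms]] reduced_walk_mat_carrier
  by (metis map_carrier_mat)

lemma det_reduced_walk_mat_odd_squarefree:
  assumes G: "in_G n arc" and A: "map_mat of_int A = reduced_walk_mat n arc"
  shows "odd (det A)" and "squarefree (det A)"
proof -
  obtain m where m: "det (walk_mat n arc) = 2 ^ (n div 2) * of_int m" "odd m" "squarefree m"
    using G unfolding in_G_def by auto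
  have "(of_int (det A) :: rat) = of_int m"
    using arg_cong[OF A, of det] m(1) unfolding of_int_hom.hom_det det_reduced_walk_mat by simp
  then show "odd (det A)" and "squarefree (det A)" using m(2,3) by simp_all
qed

section \<open>Integer matrices modulo a prime\<close>

definition mat_dvd :: "'a::comm_semiring_1 \<Rightarrow> 'a mat \<Rightarrow> bool" where
  "mat_dvd p M \<longleftrightarrow> (\<forall>i<dim_row M. \<forall>j<dim_col M. p dvd M $$ (i,j))"

lemma mat_dvd_smult: "p dvd k \<Longrightarrow> mat_dvd p (k \<cdot>\<^sub>m M)"
  unfolding mat_dvd_def by auto

lemma not_mat_dvd_adj_mat:
  fixes M :: "int mat"
  assumes M: "M \<in> carrier_mat n n" and n: "n > 0"
    and p: "prime p" and pd: "p dvd det M" and npd: "\<not> p\<^sup>2 dvd det M"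
  shows "\<not> mat_dvd p (adj_mat M)"
proof
  assume dvd: "mat_dvd p (adj_mat M)"
  define B where "B = map_mat (\<lambda>x. x div p) (adj_mat M)"
  have A: "adj_mat M \<in> carrier_mat n n" using adj_mat(1)[OF M] .
  have "adj_mat M = p \<cdot>\<^sub>m B"
    using dvd A unfolding mat_dvd_def B_def by (intro eq_matI) auto
  moreover have "B \<in> carrier_mat n n" unfolding B_def using A by simp
  ultimately have "det (adj_mat M) = p ^ n * det B" by simp
  moreover have "det M * det (adj_mat M) = det M ^ n"
    using det_mult[OF M A] adj_mat(2)[OF M] by simp
  moreover obtain d where d: "det M = p * d" using pd by blast
  ultimately have "p ^ n * (p * d * det B) = p ^ n * d ^ n"
    by (simp add: power_mult_distrib ac_simps)
  then have "p * (d * det B) = d ^ n"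
    using p by (simp add: prime_gt_0_int)
  then have "p dvd d" using p prime_dvd_power by (metis dvd_triv_left)
  then show False using npd unfolding d power2_eq_square by simp
qed

definition replace_row_unit :: "nat \<Rightarrow> nat \<Rightarrow> 'a::comm_ring_1 mat \<Rightarrow> 'a mat" where
  "replace_row_unit j i M = mat (dim_row M) (dim_col M) (\<lambda>(s,t). if s = j then of_bool (t = i) else M $$ (s,t))"

lemma replace_row_unit_carrier:
  "M \<in> carrier_mat n n \<Longrightarrow> replace_row_unit j i M \<in> carrier_mat n n"
  unfolding replace_row_unit_def by simp

lemma adj_mat_replace_row_unit:
  assumes M: "M \<in> carrier_mat n n" and i: "i < n" and j: "j < n"
  shows "det (replace_row_unit j i M) = adj_mat M $$ (i,j)"
    and "t < n \<Longrightarrow> adj_mat (replace_row_unit j i M) $$ (t,j) = adj_mat M $$ (t,j)"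
proof -
  define N where "N = replace_row_unit j i M"
  have N: "N \<in> carrier_mat n n" unfolding N_def by (rule replace_row_unit_carrier[OF M])
  have "mat_delete N j t = mat_delete M j t" for t
    using M unfolding N_def replace_row_unit_def by (intro eq_matI) (auto simp: mat_delete_def)
  then have cof: "cofactor N j t = cofactor M j t" for t unfolding cofactor_def by simp
  have "det N = (\<Sum>t<n. N $$ (j,t) * cofactor N j t)" by (rule laplace_expansion_row[OF N j])
  also have "\<dots> = (\<Sum>t<n. if t = i then cofactor M j t else 0)"
  proof (rule sum.cong[OF refl])
    fix t assume "t \<in> {..<n}"
    then have "N $$ (j,t) = of_bool (t = i)" using j M by (simp add: N_def replace_row_unit_def)
    then show "N $$ (j,t) * cofactor N j t = (if t = i then cofactor M j t else 0)"
      by (simp add: cof)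
  qed
  also have "\<dots> = adj_mat M $$ (i,j)" using M i j unfolding adj_mat_def by simp
  finally show "det (replace_row_unit j i M) = adj_mat M $$ (i,j)" unfolding N_def .
  show "adj_mat (replace_row_unit j i M) $$ (t,j) = adj_mat M $$ (t,j)" if "t < n"
    using that j M N unfolding adj_mat_def N_def[symmetric] by (simp add: cof)
qed

lemma index_replace_row_unit_mult:
  fixes M X :: "'a::comm_ring_1 mat"
  assumes M: "M \<in> carrier_mat n n" and X: "X \<in> carrier_mat n k" and i: "i < n" and s: "s < n" and v: "v < k"
  shows "(replace_row_unit j i M * X) $$ (s,v) = (if s = j then X $$ (i,v) else (M * X) $$ (s,v))"
proof -
  have "(replace_row_unit j i M * X) $$ (s,v) = (\<Sum>t<n. replace_row_unit j i M $$ (s,t) * X $$ (t,v))"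
    by (rule index_mult_mat_sum[OF replace_row_unit_carrier[OF M] X s v])
  also have "\<dots> = (\<Sum>t<n. if s = j then (if t = i then X $$ (t,v) else 0) else M $$ (s,t) * X $$ (t,v))"
    using M s by (intro sum.cong) (auto simp: replace_row_unit_def)
  finally show ?thesis using i index_mult_mat_sum[OF M X s v] by simp
qed

text \<open>Cramer's rule for \<open>replace_row_unit j\<^sub>0 i\<^sub>0 M\<close>, whose determinant is \<open>(adj M)\<^sub>i\<^sub>0\<^sub>j\<^sub>0\<close>.\<close>
lemma adj_mat_col_congruence:
  fixes M X :: "int mat"
  assumes M: "M \<in> carrier_mat n n" and X: "X \<in> carrier_mat n k" and MX: "mat_dvd p (M * X)"
    and i0: "i0 < n" and j0: "j0 < n" and r: "r < n" and v: "v < k"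
  shows "p dvd adj_mat M $$ (i0,j0) * X $$ (r,v) - X $$ (i0,v) * adj_mat M $$ (r,j0)"
proof -
  define N where "N = replace_row_unit j0 i0 M"
  have N: "N \<in> carrier_mat n n" unfolding N_def by (rule replace_row_unit_carrier[OF M])
  have AN: "adj_mat N \<in> carrier_mat n n" using adj_mat(1)[OF N] .
  note NX = index_replace_row_unit_mult[OF M X i0 _ v, of _ j0, folded N_def]
  note adjN = adj_mat_replace_row_unit[OF M i0 j0, folded N_def]
  have "det N * X $$ (r,v) = ((adj_mat N * N) * X) $$ (r,v)"
    unfolding adj_mat(3)[OF N] using X r v by simp
  also have "\<dots> = (adj_mat N * (N * X)) $$ (r,v)" by (simp only: assoc_mult_mat[OF AN N X])
  also have "\<dots> = (\<Sum>s<n. adj_mat N $$ (r,s) * (N * X) $$ (s,v))"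
    by (rule index_mult_mat_sum[OF AN mult_carrier_mat[OF N X] r v])
  also have "\<dots> = adj_mat N $$ (r,j0) * (N * X) $$ (j0,v)
      + (\<Sum>s\<in>{..<n} - {j0}. adj_mat N $$ (r,s) * (N * X) $$ (s,v))"
    by (rule sum.remove) (use j0 in auto)
  also have "\<dots> = adj_mat M $$ (r,j0) * X $$ (i0,v)
      + (\<Sum>s\<in>{..<n} - {j0}. adj_mat N $$ (r,s) * (M * X) $$ (s,v))"
    using j0 r by (auto simp: NX adjN(2) intro!: sum.cong)
  finally have "adj_mat M $$ (i0,j0) * X $$ (r,v) - X $$ (i0,v) * adj_mat M $$ (r,j0)
      = (\<Sum>s\<in>{..<n} - {j0}. adj_mat N $$ (r,s) * (M * X) $$ (s,v))"
    unfolding adjN(1) by simp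
  also have "p dvd \<dots>"
    using MX M X v unfolding mat_dvd_def by (intro dvd_sum dvd_mult) auto
  finally show ?thesis .
qed

lemma kernel_mod_prime_rank_one:
  fixes M :: "int mat"
  assumes M: "M \<in> carrier_mat n n" and n: "n > 0"
    and p: "prime p" and pd: "p dvd det M" and npd: "\<not> p\<^sup>2 dvd det M"
  obtains i0 a c where "i0 < n" and "\<not> p dvd a"
    and "\<And>Z k r v. Z \<in> carrier_mat n k \<Longrightarrow> mat_dvd p (M * Z) \<Longrightarrow> r < n \<Longrightarrow> v < k \<Longrightarrow>
      p dvd a * Z $$ (r,v) - Z $$ (i0,v) * c r"
proof -
  obtain i0 j0 where ij0: "i0 < n" "j0 < n" and pa: "\<not> p dvd adj_mat M $$ (i0,j0)"
    using not_mat_dvd_adj_mat[OF M n p pd npd] adj_mat(1)[OF M] unfolding mat_dvd_def by auto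
  show thesis
  proof (rule that[OF ij0(1) pa])
    fix Z :: "int mat" and k r v
    assume "Z \<in> carrier_mat n k" "mat_dvd p (M * Z)" "r < n" "v < k"
    from adj_mat_col_congruence[OF M this(1,2) ij0 this(3,4)]
    show "p dvd adj_mat M $$ (i0,j0) * Z $$ (r,v) - Z $$ (i0,v) * adj_mat M $$ (r,j0)" .
  qed
qed

lemma transpose_mult_expansion:
  fixes Z W :: "int mat" and a p :: int and c :: "nat \<Rightarrow> int"
  assumes Z: "Z \<in> carrier_mat n k" and W: "W \<in> carrier_mat n k'" and u: "u < k'" and v: "v < k"
    and decZ: "\<And>r v. r < n \<Longrightarrow> v < k \<Longrightarrow> a * Z $$ (r,v) = Z $$ (i0,v) * c r + p * \<xi> r v"
    and decW: "\<And>r u. r < n \<Longrightarrow> u < k' \<Longrightarrow> a * W $$ (r,u) = W $$ (i0,u) * c r + p * \<eta> r u"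
  shows "a * a * (transpose_mat W * Z) $$ (u,v) = W $$ (i0,u) * Z $$ (i0,v) * (\<Sum>r<n. c r * c r)
    + p * (W $$ (i0,u) * (\<Sum>r<n. c r * \<xi> r v) + Z $$ (i0,v) * (\<Sum>r<n. c r * \<eta> r u))
    + p\<^sup>2 * (\<Sum>r<n. \<eta> r u * \<xi> r v)"
proof -
  have "a * a * (transpose_mat W * Z) $$ (u,v) = (\<Sum>r<n. (a * W $$ (r,u)) * (a * Z $$ (r,v)))"
    unfolding index_transpose_mult_sum[OF W Z u v] by (simp add: sum_distrib_left ac_simps)
  also have "\<dots> = (\<Sum>r<n. (W $$ (i0,u) * c r + p * \<eta> r u) * (Z $$ (i0,v) * c r + p * \<xi> r v))"
    using decZ[OF _ v] decW[OF _ u] by (intro sum.cong) simp_all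
  also have "\<dots> = (\<Sum>r<n. W $$ (i0,u) * Z $$ (i0,v) * (c r * c r)
      + p * (W $$ (i0,u) * (c r * \<xi> r v) + Z $$ (i0,v) * (c r * \<eta> r u)) + p\<^sup>2 * (\<eta> r u * \<xi> r v))"
    by (intro sum.cong) (simp_all add: algebra_simps power2_eq_square)
  finally show ?thesis by (simp add: sum.distrib sum_distrib_left distrib_left)
qed

lemma prime_dvd_linear_of_quadratic:
  fixes p g :: int and x s :: "nat \<Rightarrow> int"
  assumes p: "prime p" and xb: "\<not> p dvd x b" and V: "b \<in> V" "v \<in> V"
    and quad: "\<And>w. w \<in> V \<Longrightarrow> p dvd g * x b * x w + x b * s w + x w * s b"
  shows "p dvd g * x v + 2 * s v"
proof -
  have "p dvd x b * (g * x b + 2 * s b)"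
    using quad[OF V(1)] by (simp add: algebra_simps)
  then have L0: "p dvd g * x b + 2 * s b" using xb p by (simp add: prime_dvd_mult_iff)
  have "x b * (g * x v + 2 * s v)
      = 2 * (g * x b * x v + x b * s v + x v * s b) - x v * (g * x b + 2 * s b)"
    by (simp add: algebra_simps)
  also have "p dvd \<dots>" using quad[OF V(2)] L0 by (intro dvd_diff dvd_mult)
  finally show ?thesis using xb p by (simp add: prime_dvd_mult_iff)
qed

lemma congruences_of_sq_dvd_quadratic:
  fixes p C :: int and z s :: "nat \<Rightarrow> int"
  assumes p: "prime p" and zb: "\<not> p dvd z b" and b: "b \<in> V"
    and sq: "\<And>w v. w \<in> V \<Longrightarrow> v \<in> V \<Longrightarrow>
      p\<^sup>2 dvd z w * z v * C + p * (z w * s v + z v * s w) + p\<^sup>2 * R w v"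
  shows "p dvd C" and "v \<in> V \<Longrightarrow> p dvd C div p * z v + 2 * s v"
proof -
  have "p dvd z b * z b * C + (p * (z b * s b + z b * s b) + p\<^sup>2 * R b b)"
    using dvd_trans[OF _ sq[OF b b], of p] by (simp add: add.assoc)
  moreover have "p dvd p * (z b * s b + z b * s b) + p\<^sup>2 * R b b"
    by (simp add: power2_eq_square)
  ultimately have "p dvd z b * z b * C" by (simp add: dvd_add_left_iff)
  then show "p dvd C" using p zb by (simp add: prime_dvd_mult_iff)
  then obtain g where g: "C = p * g" by blast
  have quad: "p dvd g * z b * z w + z b * s w + z w * s b" if w: "w \<in> V" for w
  proof -
    have "z b * z w * C + p * (z b * s w + z w * s b) + p\<^sup>2 * R b w
        = p * (g * z b * z w + z b * s w + z w * s b) + p * p * R b w"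
      unfolding g power2_eq_square by (simp add: algebra_simps)
    then have "p * p dvd p * (g * z b * z w + z b * s w + z w * s b) + p * p * R b w"
      using sq[OF b w] unfolding power2_eq_square by simp
    then show ?thesis using p by (simp add: dvd_add_left_iff)
  qed
  show "p dvd C div p * z v + 2 * s v" if "v \<in> V"
    using prime_dvd_linear_of_quadratic[where x = z and b = b, OF p zb b that quad] p
    unfolding g by (simp add: prime_gt_0_int)
qed

lemma gram_congruence:
  fixes Z :: "int mat" and a p :: int and c :: "nat \<Rightarrow> int" and n :: nat
  defines "C \<equiv> \<Sum>r<n. c r * c r"
  assumes p: "prime p" and pa: "\<not> p dvd a" and Z: "Z \<in> carrier_mat n k"
    and dec: "\<And>r v. r < n \<Longrightarrow> v < k \<Longrightarrow> a * Z $$ (r,v) = Z $$ (i0,v) * c r + p * \<xi> r v"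
    and gram: "mat_dvd (p\<^sup>2) (transpose_mat Z * Z)" and nz: "\<not> mat_dvd p Z" and i0: "i0 < n"
  shows "p dvd C" and "v < k \<Longrightarrow> p dvd C div p * Z $$ (i0,v) + 2 * (\<Sum>r<n. c r * \<xi> r v)"
proof -
  have "\<exists>b<k. \<not> p dvd Z $$ (i0,b)"
  proof (rule ccontr)
    assume "\<not> ?thesis"
    then have "p dvd a * Z $$ (r,v)" if "r < n" "v < k" for r v
      unfolding dec[OF that] using that by simp
    then have "mat_dvd p Z" using Z pa p unfolding mat_dvd_def by (auto simp: prime_dvd_mult_iff)
    with nz show False ..
  qed
  then obtain b where b: "b \<in> {..<k}" and zb: "\<not> p dvd Z $$ (i0,b)" by blast
  have "p\<^sup>2 dvd Z $$ (i0,w) * Z $$ (i0,v) * C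
      + p * (Z $$ (i0,w) * (\<Sum>r<n. c r * \<xi> r v) + Z $$ (i0,v) * (\<Sum>r<n. c r * \<xi> r w))
      + p\<^sup>2 * (\<Sum>r<n. \<xi> r w * \<xi> r v)" if "w \<in> {..<k}" "v \<in> {..<k}" for w v
  proof -
    from that have wv: "w < k" "v < k" by simp_all
    have "p\<^sup>2 dvd a * a * (transpose_mat Z * Z) $$ (w,v)"
      using gram Z wv unfolding mat_dvd_def by simp
    then show ?thesis by (simp only: transpose_mult_expansion[OF Z Z wv dec dec] C_def)
  qed
  note congruences = congruences_of_sq_dvd_quadratic[where z = "\<lambda>v. Z $$ (i0,v)", OF p zb b this]
  show "p dvd C" by (rule congruences(1))
  show "p dvd C div p * Z $$ (i0,v) + 2 * (\<Sum>r<n. c r * \<xi> r v)" if "v < k"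
    using congruences(2)[of v] that by simp
qed

lemma sq_dvd_of_linear_congruences:
  fixes p a g x y s t E R C :: int
  assumes p: "prime p" and p2: "p \<noteq> 2" and pa: "\<not> p dvd a" and C: "C = p * g"
    and Lx: "p dvd g * x + 2 * s" and Ly: "p dvd g * y + 2 * t"
    and E: "a * a * E = y * x * C + p * (y * s + x * t) + p\<^sup>2 * R"
  shows "p\<^sup>2 dvd E"
proof -
  define K where "K = g * y * x + y * s + x * t"
  have "2 * K = y * (g * x + 2 * s) + x * (g * y + 2 * t)"
    unfolding K_def by (simp add: algebra_simps)
  then have "p dvd 2 * K" using Lx Ly by (simp add: dvd_add dvd_mult)
  moreover have "\<not> p dvd 2"
  proof
    assume "p dvd 2"
    then have "p \<le> 2" by (rule zdvd_imp_le) simp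
    with p p2 show False using prime_ge_2_int[of p] by simp
  qed
  ultimately have "p dvd K" using p by (simp add: prime_dvd_mult_iff)
  moreover have "a\<^sup>2 * E = p * K + p\<^sup>2 * R"
    using E unfolding C K_def power2_eq_square by (simp add: algebra_simps)
  ultimately have "p\<^sup>2 dvd a\<^sup>2 * E" by (simp add: power2_eq_square)
  moreover have "coprime (p\<^sup>2) (a\<^sup>2)" using p pa by (simp add: prime_imp_coprime)
  ultimately show ?thesis by (simp add: coprime_dvd_mult_right_iff)
qed

text \<open>Modulo \<open>p\<close> the columns of \<open>X\<close> and \<open>Y\<close> are multiples of one vector \<open>c\<close> with \<open>c\<^sup>T c \<equiv> 0\<close>.
  Writing a column as \<open>\<lambda> c + p \<xi>\<close>, the form \<open>z\<^sup>T w / p\<close> (mod \<open>p\<close>) depends only on the pairs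
  \<open>(\<lambda>, c\<^sup>T \<xi>)\<close> and is a hyperbolic plane there; its isotropic lines are \<open>\<lambda> = 0\<close> and
  \<open>g \<lambda> + 2 c\<^sup>T \<xi> = 0\<close>, where \<open>c\<^sup>T c = p g\<close>. Since the columns of \<open>X\<close> are pairwise orthogonal for
  this form and not all have \<open>\<lambda> = 0\<close>, they lie on the second line, and so do those of \<open>Y\<close>.\<close>
lemma sq_dvd_transpose_mult_of_kernel_mod:
  fixes M X Y :: "int mat" and p :: int
  assumes M: "M \<in> carrier_mat n n" and X: "X \<in> carrier_mat n k" and Y: "Y \<in> carrier_mat n k'"
    and p: "prime p" and p2: "p \<noteq> 2" and pd: "p dvd det M" and npd: "\<not> p\<^sup>2 dvd det M"
    and MX: "mat_dvd p (M * X)" and MY: "mat_dvd p (M * Y)"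
    and XX: "mat_dvd (p\<^sup>2) (transpose_mat X * X)" and YY: "mat_dvd (p\<^sup>2) (transpose_mat Y * Y)"
    and Xnz: "\<not> mat_dvd p X" and Ynz: "\<not> mat_dvd p Y"
  shows "mat_dvd (p\<^sup>2) (transpose_mat Y * X)"
proof -
  have "n > 0" using Xnz X unfolding mat_dvd_def by (cases n) auto
  then obtain i0 a c where i0: "i0 < n" and pa: "\<not> p dvd a" and dec: "\<And>Z k r v.
      Z \<in> carrier_mat n k \<Longrightarrow> mat_dvd p (M * Z) \<Longrightarrow> r < n \<Longrightarrow> v < k \<Longrightarrow>
      p dvd a * Z $$ (r,v) - Z $$ (i0,v) * c r"
    using kernel_mod_prime_rank_one[OF M _ p pd npd] by blast
  define \<xi> where "\<xi> r v = (a * X $$ (r,v) - X $$ (i0,v) * c r) div p" for r v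
  define \<eta> where "\<eta> r u = (a * Y $$ (r,u) - Y $$ (i0,u) * c r) div p" for r u
  have decX: "a * X $$ (r,v) = X $$ (i0,v) * c r + p * \<xi> r v" if "r < n" "v < k" for r v
    using dec[OF X MX that] unfolding \<xi>_def by simp
  have decY: "a * Y $$ (r,u) = Y $$ (i0,u) * c r + p * \<eta> r u" if "r < n" "u < k'" for r u
    using dec[OF Y MY that] unfolding \<eta>_def by simp
  obtain g where g: "(\<Sum>r<n. c r * c r) = p * g"
    using gram_congruence(1)[OF p pa X decX XX Xnz i0] by blast
  then have g': "(\<Sum>r<n. c r * c r) div p = g" using p by (simp add: prime_gt_0_int)
  have "p\<^sup>2 dvd (transpose_mat Y * X) $$ (u,v)" if u: "u < k'" and v: "v < k" for u v
  proof (rule sq_dvd_of_linear_congruences[OF p p2 pa g])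
    show "p dvd g * X $$ (i0,v) + 2 * (\<Sum>r<n. c r * \<xi> r v)"
      using gram_congruence(2)[OF p pa X decX XX Xnz i0 v] unfolding g' .
    show "p dvd g * Y $$ (i0,u) + 2 * (\<Sum>r<n. c r * \<eta> r u)"
      using gram_congruence(2)[OF p pa Y decY YY Ynz i0 u] unfolding g' .
  qed (rule transpose_mult_expansion[OF X Y u v decX decY])
  then show ?thesis unfolding mat_dvd_def using X Y by simp
qed

lemma sq_dvd_of_squarefree:
  fixes a :: nat and b :: int
  assumes "squarefree a" and "\<And>p. prime p \<Longrightarrow> p dvd a \<Longrightarrow> (int p)\<^sup>2 dvd b"
  shows "(int a)\<^sup>2 dvd b"
  using assms
proof (induction a rule: less_induct)
  case (less a)
  show ?case
  proof (cases "a = 1")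
    case False
    have "a \<noteq> 0"
    proof
      assume "a = 0"
      then have "2\<^sup>2 dvd a" by simp
      with squarefreeD[OF less.prems(1), of 2] show False by simp
    qed
    then obtain p where p: "prime p" "p dvd a" using False prime_factor_nat by blast
    then obtain a' where a: "a = p * a'" by blast
    have "\<not> p dvd a'"
    proof
      assume "p dvd a'"
      then have "p\<^sup>2 dvd a" unfolding a power2_eq_square by simp
      with squarefreeD[OF less.prems(1), of p] p(1) show False by simp
    qed
    then have "coprime ((int p)\<^sup>2) ((int a')\<^sup>2)" using p(1) by (simp add: prime_imp_coprime)
    moreover have "(int a')\<^sup>2 dvd b"
    proof (rule less.IH)
      show "a' < a" using a \<open>a \<noteq> 0\<close> prime_gt_1_nat[OF p(1)] by simp
      show "squarefree a'" using squarefree_mono[OF _ less.prems(1)] a by simp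
    qed (use less.prems(2) a in auto)
    ultimately show ?thesis
      using divides_mult[OF less.prems(2)[OF p]] unfolding a by (simp add: power_mult_distrib)
  qed simp
qed

lemma squarefree_nat_abs:
  fixes m :: int
  assumes "squarefree m"
  shows "squarefree (nat \<bar>m\<bar>)"
proof (rule squarefreeI)
  fix x :: nat assume "x\<^sup>2 dvd nat \<bar>m\<bar>"
  then have "int (x\<^sup>2) dvd int (nat \<bar>m\<bar>)" by (simp only: int_dvd_int_iff)
  then have "(int x)\<^sup>2 dvd m" by simp
  then have "int x dvd 1" by (rule squarefreeD[OF assms])
  then show "x dvd 1" by simp
qed

section \<open>The level of \<open>Q\<^sub>1\<^sup>T Q\<close>\<close>

lemma not_mat_dvd_level_scaled:
  fixes Q :: "rat mat" and X :: "int mat"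
  assumes X: "map_mat of_int X = of_nat (level Q) \<cdot>\<^sub>m Q"
    and p: "prime p" and pl: "p dvd level Q"
  shows "\<not> mat_dvd (int p) X"
proof
  assume dvd: "mat_dvd (int p) X"
  obtain k where k: "level Q = p * k" using pl by blast
  have "integral_mat (of_nat k \<cdot>\<^sub>m Q)" unfolding integral_mat_smult_iff
  proof (intro allI impI)
    fix i j assume ij: "i < dim_row Q" "j < dim_col Q"
    then obtain z where z: "X $$ (i,j) = int p * z"
      using dvd map_mat_eq_smult_dims[OF X] unfolding mat_dvd_def by fastforce
    have "of_int (X $$ (i,j)) = of_nat (level Q) * Q $$ (i,j)"
      using arg_cong[OF X, of "\<lambda>M. M $$ (i,j)"] map_mat_eq_smult_dims[OF X] ij
      by simp
    then have "of_nat p * (of_nat k * Q $$ (i,j) - of_int z) = (0 :: rat)"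
      unfolding z k by (auto simp: algebra_simps)
    then have "of_nat k * Q $$ (i,j) = (of_int z :: rat)" using prime_gt_0_nat[OF p] by simp
    then show "of_nat k * Q $$ (i,j) \<in> \<int>" by simp
  qed
  moreover have "k > 0" "k < level Q" using level_pos[of Q] prime_gt_1_nat[OF p] unfolding k by auto
  ultimately show False using level_le[of k Q] by simp
qed

lemma level_scaled_mod_prime:
  fixes Q :: "rat mat" and A B X :: "int mat"
  assumes Q: "Q \<in> carrier_mat n n" and QtQ: "transpose_mat Q * Q = 1\<^sub>m n"
    and A: "A \<in> carrier_mat n n" and B: "B \<in> carrier_mat n n"
    and QA: "transpose_mat Q * map_mat of_int A = map_mat of_int B"
    and X: "map_mat of_int X = of_nat (level Q) \<cdot>\<^sub>m Q"
    and p: "prime p" and pl: "p dvd level Q"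
  shows "mat_dvd (int p) (transpose_mat A * X)"
    and "mat_dvd ((int p)\<^sup>2) (transpose_mat X * X)"
    and "\<not> mat_dvd (int p) X"
proof -
  have X': "map_mat of_int X = of_int (int (level Q)) \<cdot>\<^sub>m Q" using X by simp
  show "mat_dvd (int p) (transpose_mat A * X)"
    unfolding transpose_mult_scaled[OF Q A B QA X'] using pl by (intro mat_dvd_smult) simp
  show "mat_dvd ((int p)\<^sup>2) (transpose_mat X * X)"
    unfolding transpose_mult_scaled_orthogonal[OF Q QtQ X'] using pl
    by (intro mat_dvd_smult) (simp add: power2_eq_square mult_dvd_mono)
  show "\<not> mat_dvd (int p) X" by (rule not_mat_dvd_level_scaled[OF X p pl])
qed

lemma mat_dvd_level_sq_transpose_mult:
  fixes Q Q\<^sub>1 :: "rat mat" and A B C X Y :: "int mat"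
  assumes Q: "Q \<in> carrier_mat n n" "transpose_mat Q * Q = 1\<^sub>m n"
    and Q1: "Q\<^sub>1 \<in> carrier_mat n n" "transpose_mat Q\<^sub>1 * Q\<^sub>1 = 1\<^sub>m n"
    and A: "A \<in> carrier_mat n n" and B: "B \<in> carrier_mat n n" and C: "C \<in> carrier_mat n n"
    and QA: "transpose_mat Q * map_mat of_int A = map_mat of_int B"
    and Q1A: "transpose_mat Q\<^sub>1 * map_mat of_int A = map_mat of_int C"
    and odd: "odd (det A)" and sqf: "squarefree (det A)" and dvd: "level Q\<^sub>1 dvd level Q"
    and X: "map_mat of_int X = of_nat (level Q) \<cdot>\<^sub>m Q"
    and Y: "map_mat of_int Y = of_nat (level Q\<^sub>1) \<cdot>\<^sub>m Q\<^sub>1"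
  shows "mat_dvd ((int (level Q\<^sub>1))\<^sup>2) (transpose_mat Y * X)"
proof -
  have "det A \<noteq> 0" using odd by auto
  then have l1: "level Q\<^sub>1 dvd nat \<bar>det A\<bar>" by (rule level_dvd_det[OF Q1(1) A C Q1A])
  have Xc: "X \<in> carrier_mat n n" and Yc: "Y \<in> carrier_mat n n"
    using map_mat_eq_smult_dims[OF X] map_mat_eq_smult_dims[OF Y] Q Q1 by auto
  have prime_case: "mat_dvd ((int p)\<^sup>2) (transpose_mat Y * X)" if p: "prime p" and pl1: "p dvd level Q\<^sub>1" for p
  proof (rule sq_dvd_transpose_mult_of_kernel_mod)
    have "int p dvd int (nat \<bar>det A\<bar>)" using dvd_trans[OF pl1 l1] by (simp only: int_dvd_int_iff)
    then have "int p dvd det A" by simp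
    then show "int p dvd det (transpose_mat A)" and "int p \<noteq> 2"
      using A odd by (auto simp: det_transpose)
    show "\<not> (int p)\<^sup>2 dvd det (transpose_mat A)"
      using A squarefreeD[OF sqf, of "int p"] p by (auto simp: det_transpose)
    note X_facts = level_scaled_mod_prime[OF Q A B QA X p dvd_trans[OF pl1 dvd]]
    note Y_facts = level_scaled_mod_prime[OF Q1 A C Q1A Y p pl1]
    show "mat_dvd (int p) (transpose_mat A * X)" "mat_dvd ((int p)\<^sup>2) (transpose_mat X * X)"
      "\<not> mat_dvd (int p) X" using X_facts by simp_all
    show "mat_dvd (int p) (transpose_mat A * Y)" "mat_dvd ((int p)\<^sup>2) (transpose_mat Y * Y)"
      "\<not> mat_dvd (int p) Y" using Y_facts by simp_all
  qed (use p A Xc Yc in auto)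
  have "squarefree (level Q\<^sub>1)"
    using squarefree_mono[OF l1 squarefree_nat_abs[OF sqf]] .
  then show ?thesis
    using prime_case unfolding mat_dvd_def by (auto intro: sq_dvd_of_squarefree)
qed

lemma integral_mat_transpose_mult_scaled:
  fixes Q Q\<^sub>1 :: "rat mat" and X Y :: "int mat"
  assumes Q: "Q \<in> carrier_mat n n" and Q1: "Q\<^sub>1 \<in> carrier_mat n n"
    and X: "map_mat of_int X = of_nat (l\<^sub>1 * q) \<cdot>\<^sub>m Q" and Y: "map_mat of_int Y = of_nat l\<^sub>1 \<cdot>\<^sub>m Q\<^sub>1"
    and l1: "l\<^sub>1 > 0" and sq: "mat_dvd ((int l\<^sub>1)\<^sup>2) (transpose_mat Y * X)"
  shows "integral_mat (of_nat q \<cdot>\<^sub>m (transpose_mat Q\<^sub>1 * Q))"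
  unfolding integral_mat_smult_iff
proof (intro allI impI)
  fix u v assume "u < dim_row (transpose_mat Q\<^sub>1 * Q)" "v < dim_col (transpose_mat Q\<^sub>1 * Q)"
  then have uv: "u < n" "v < n" using Q Q1 by auto
  have YX: "map_mat of_int (transpose_mat Y * X) = of_nat (l\<^sub>1 * l\<^sub>1 * q) \<cdot>\<^sub>m (transpose_mat Q\<^sub>1 * Q)"
    using map_mat_transpose_mult_scaled[OF Q Q1, of X "int (l\<^sub>1 * q)" Y "int l\<^sub>1"] X Y by (simp add: ac_simps)
  have dims: "dim_row (transpose_mat Y * X) = n" "dim_col (transpose_mat Y * X) = n"
    using map_mat_eq_smult_dims[OF YX] Q Q1 by auto
  obtain e where e: "(transpose_mat Y * X) $$ (u,v) = (int l\<^sub>1)\<^sup>2 * e"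
    using sq uv dims unfolding mat_dvd_def by fastforce
  have "of_int ((transpose_mat Y * X) $$ (u,v))
      = of_nat l\<^sub>1 * of_nat l\<^sub>1 * (of_nat q * (transpose_mat Q\<^sub>1 * Q) $$ (u,v))"
    using arg_cong[OF YX, of "\<lambda>M. M $$ (u,v)"] uv Q Q1 dims by (simp add: ac_simps)
  then have "of_nat l\<^sub>1 * of_nat l\<^sub>1 * (of_nat q * (transpose_mat Q\<^sub>1 * Q) $$ (u,v))
      = of_nat l\<^sub>1 * of_nat l\<^sub>1 * (of_int e :: rat)"
    unfolding e by (auto simp: power2_eq_square ac_simps)
  then have "of_nat q * (transpose_mat Q\<^sub>1 * Q) $$ (u,v) = (of_int e :: rat)" using l1 by simp
  then show "of_nat q * (transpose_mat Q\<^sub>1 * Q) $$ (u,v) \<in> \<int>" by simp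
qed

lemma level_transpose_mult:
  fixes Q Q\<^sub>1 :: "rat mat" and A B C :: "int mat"
  assumes Q: "Q \<in> carrier_mat n n" "transpose_mat Q * Q = 1\<^sub>m n"
    and Q1: "Q\<^sub>1 \<in> carrier_mat n n" "transpose_mat Q\<^sub>1 * Q\<^sub>1 = 1\<^sub>m n"
    and A: "A \<in> carrier_mat n n" and B: "B \<in> carrier_mat n n" and C: "C \<in> carrier_mat n n"
    and QA: "transpose_mat Q * map_mat of_int A = map_mat of_int B"
    and Q1A: "transpose_mat Q\<^sub>1 * map_mat of_int A = map_mat of_int C"
    and odd: "odd (det A)" and sqf: "squarefree (det A)" and dvd: "level Q\<^sub>1 dvd level Q"
  shows "level (transpose_mat Q\<^sub>1 * Q) = level Q div level Q\<^sub>1"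
proof (rule dvd_antisym)
  define q where "q = level Q div level Q\<^sub>1"
  have l: "level Q = level Q\<^sub>1 * q" and l1: "level Q\<^sub>1 > 0" and q: "q > 0"
    using dvd level_pos[of Q] level_pos[of Q\<^sub>1] unfolding q_def by (auto elim!: dvdE)
  obtain X Y where X: "map_mat of_int X = of_nat (level Q) \<cdot>\<^sub>m Q"
    and Y: "map_mat of_int Y = of_nat (level Q\<^sub>1) \<cdot>\<^sub>m Q\<^sub>1"
    using integral_mat_of_int[OF level_integral] by metis
  have "mat_dvd ((int (level Q\<^sub>1))\<^sup>2) (transpose_mat Y * X)"
    by (rule mat_dvd_level_sq_transpose_mult[OF Q Q1 A B C QA Q1A odd sqf dvd X Y])
  then show "level (transpose_mat Q\<^sub>1 * Q) dvd q"
    using integral_mat_transpose_mult_scaled[OF Q(1) Q1(1) X[unfolded l] Y l1] q by (intro level_dvd)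
  have "Q\<^sub>1 * (transpose_mat Q\<^sub>1 * Q) = Q"
    using Q1 Q mat_mult_left_right_inverse[OF _ Q1(1) Q1(2)]
    by (simp add: assoc_mult_mat[symmetric, of _ n n _ n _ n])
  then have "level Q dvd level Q\<^sub>1 * level (transpose_mat Q\<^sub>1 * Q)"
    using level_mult_dvd[OF Q1(1), of "transpose_mat Q\<^sub>1 * Q" n] Q Q1 by simp
  then show "q dvd level (transpose_mat Q\<^sub>1 * Q)" using l1 unfolding l by simp
qed

theorem lemma4p2:
  fixes n :: nat and \<Sigma> \<Delta> \<Gamma> :: "nat \<Rightarrow> nat \<Rightarrow> bool" and Q Q\<^sub>1 :: "rat mat"
  assumes "in_G n \<Sigma>" and "in_G n \<Delta>" and "in_G n \<Gamma>"
    and "gen_cospectral n \<Sigma> \<Delta>" and "gen_cospectral n \<Sigma> \<Gamma>" and "gen_cospectral n \<Delta> \<Gamma>"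
    and "Q \<in> Qset n \<Sigma>" and "Q\<^sub>1 \<in> Qset n \<Sigma>"
    and "transpose_mat Q * skew_adj n \<Sigma> * Q = skew_adj n \<Delta>"
    and "transpose_mat Q\<^sub>1 * skew_adj n \<Sigma> * Q\<^sub>1 = skew_adj n \<Gamma>"
    and "level Q\<^sub>1 dvd level Q"
  shows "transpose_mat (transpose_mat Q\<^sub>1 * Q) * skew_adj n \<Gamma> * (transpose_mat Q\<^sub>1 * Q) = skew_adj n \<Delta>
    \<and> level (transpose_mat Q\<^sub>1 * Q) = level Q div level Q\<^sub>1"
proof -
  have "regular_rat_orth n Q" and "regular_rat_orth n Q\<^sub>1"
    using assms(7,8) unfolding Qset_def by auto
  then have Q: "Q \<in> carrier_mat n n" "transpose_mat Q * Q = 1\<^sub>m n"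
    and Q1: "Q\<^sub>1 \<in> carrier_mat n n" "transpose_mat Q\<^sub>1 * Q\<^sub>1 = 1\<^sub>m n"
    and QA: "transpose_mat Q * reduced_walk_mat n \<Sigma> = reduced_walk_mat n \<Delta>"
    and Q1A: "transpose_mat Q\<^sub>1 * reduced_walk_mat n \<Sigma> = reduced_walk_mat n \<Gamma>"
    using reduced_walk_mat_transport assms(4,5,9,10)
    unfolding regular_rat_orth_def gen_cospectral_def by auto
  obtain A B C where A: "A \<in> carrier_mat n n" "map_mat of_int A = reduced_walk_mat n \<Sigma>"
    and B: "B \<in> carrier_mat n n" "map_mat of_int B = reduced_walk_mat n \<Delta>"
    and C: "C \<in> carrier_mat n n" "map_mat of_int C = reduced_walk_mat n \<Gamma>"
    using reduced_walk_mat_of_int assms(1-3) unfolding in_G_def by metis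
  have "level (transpose_mat Q\<^sub>1 * Q) = level Q div level Q\<^sub>1"
    using level_transpose_mult[OF Q Q1 A(1) B(1) C(1)] QA Q1A A(2) B(2) C(2) assms(11)
      det_reduced_walk_mat_odd_squarefree[OF assms(1) A(2)] by simp
  moreover have "transpose_mat (transpose_mat Q\<^sub>1 * Q) * skew_adj n \<Gamma> * (transpose_mat Q\<^sub>1 * Q)
      = skew_adj n \<Delta>"
    using transpose_mult_conj[OF Q(1) Q1(1) skew_adj_carrier[of n \<Sigma>] Q1(2)] unfolding assms(9,10) .
  ultimately show ?thesis by simp
qed

end
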